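(* Assume Case 4 holds with index $k$. Let $(C,D)=(n_{k+1},m_{k+1})$ and for $n\ge1$ put $(C_n,D_n)=(\gamma_n-(\gamma-C)d^{n-1},\ Dd^{n-1})$ and $(C_n^*,D_n^* )=\big((\delta^{n-1}+\delta^{n-2}D+\cdots+D^{n-1})C,\ D^n\big)$. (i) If $\delta>T_k$, then for every $n\ge1$, $(C_n,D_n)$ is the vertex of $N(Q^n)$ immediately following $(\gamma_n,d^n)$ (in order of increasing $x$-coordinate), the segment joining them has slope $-(l_1+l_2)^{-1}$, and $\delta^n$ is strictly bigger than the $y$-intercept of the line through these two points. (ii) If $\delta=T_k$ and $m_{k+1}>0$, then for every $n\ge1$, $(C_n^*,D_n^* )$ is the vertex of $N(Q^n)$ immediately following $(\gamma_n,d^n)$, the segment joining them has slope $-(l_1+l_2)^{-1}$, and $\delta^n$ equals the $y$-intercept of the line through these two points.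
   Context: Let $f(z,w)=(p(z),q(z,w))$ be a holomorphic skew product germ at the origin of $\mathbb{C}^2$ with $f(0,0)=(0,0)$, where $p(z)=a_\delta z^\delta+O(z^{\delta+1})$ with $a_\delta\neq0$ and integer $\delta\ge1$, and $q(z,w)=\sum_{i+j\ge1}b_{ij}z^iw^j$ is not identically zero. For $n\ge1$ write $f^n=(p^n,Q^n)$. The Newton polygon $N(g)$ of a nonzero germ $g=\sum g_{ij}z^iw^j$ is the convex hull of $\bigcup_{g_{ij}\neq0}\{(x,y):x\ge i,\ y\ge j\}$. Let $(n_1,m_1),\dots,(n_s,m_s)$ be the vertices of $N(q)$ with $n_1<\cdots<n_s$, $m_1>\cdots>m_s$; for $1\le k\le s-1$ let $T_k$ be the $y$-intercept of the line through $(n_k,m_k)$ and $(n_{k+1},m_{k+1})$. Case 4 means: $s>2$ and $T_k\le\delta\le T_{k-1}$ for some $2\le k\le s-1$; for this $k$ set $(\gamma,d)=(n_k,m_k)$, $l_1=\frac{n_k-n_{k-1}}{m_{k-1}-m_k}$ and $l_2$ defined by $l_1+l_2=\frac{n_{k+1}-n_k}{m_k-m_{k+1}}$. Define $\gamma_n=\gamma(\delta^{n-1}+\delta^{n-2}d+\cdots+d^{n-1})$. *)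

theory Defs
  imports "HOL-Analysis.Analysis" "HOL-Computational_Algebra.Formal_Power_Series"
begin

text \<open>Bivariate formal power series in (z,w) are represented as complex fps fps:
  the outer variable is w, the inner one is z.  The coefficient of z^i w^j of F is
  bcoeff F i j.\<close>

type_synonym bfps = "complex fps fps"

definition bcoeff :: "bfps \<Rightarrow> nat \<Rightarrow> nat \<Rightarrow> complex" where
  "bcoeff F i j = fps_nth (fps_nth F j) i"

definition convergent_fps1 :: "complex fps \<Rightarrow> bool" where
  "convergent_fps1 P \<longleftrightarrow> (\<exists>M R::real. \<forall>i. norm (fps_nth P i) \<le> M * R ^ i)"

definition convergent_fps2 :: "bfps \<Rightarrow> bool" where
  "convergent_fps2 F \<longleftrightarrow> (\<exists>M R::real. \<forall>i j. norm (bcoeff F i j) \<le> M * R ^ (i + j))"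

text \<open>Substitution q(P(z), G(z,w)) for P with P(0)=0 and G(0,0)=0: the coefficient
  of z^a w^b only receives contributions from the terms q_ij P^i G^j with i+j \<le> a+b.\<close>
definition bsubst :: "bfps \<Rightarrow> complex fps \<Rightarrow> bfps \<Rightarrow> bfps" where
  "bsubst q P G = Abs_fps (\<lambda>b. Abs_fps (\<lambda>a.
     bcoeff (\<Sum>i\<le>a+b. \<Sum>j\<le>a+b-i.
        fps_const (fps_const (bcoeff q i j)) * fps_const P ^ i * G ^ j) a b))"

text \<open>Iterates f^n = (p^n, Q^n) of the skew product f = (p,q), with f^(n+1) = f o f^n.\<close>
primrec piter :: "complex fps \<Rightarrow> nat \<Rightarrow> complex fps" where
  "piter p 0 = fps_X"
| "piter p (Suc n) = p oo piter p n"

primrec Qiter :: "complex fps \<Rightarrow> bfps \<Rightarrow> nat \<Rightarrow> bfps" where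
  "Qiter p q 0 = fps_X"
| "Qiter p q (Suc n) = bsubst q (piter p n) (Qiter p q n)"

definition newton_polygon :: "bfps \<Rightarrow> (real \<times> real) set" where
  "newton_polygon g = convex hull
     (\<Union>{{(x, y). real i \<le> x \<and> real j \<le> y} | i j. bcoeff g i j \<noteq> 0})"

definition vertices :: "bfps \<Rightarrow> (real \<times> real) set" where
  "vertices g = {v. v extreme_point_of newton_polygon g}"

definition next_vertex :: "bfps \<Rightarrow> real \<times> real \<Rightarrow> real \<times> real \<Rightarrow> bool" where
  "next_vertex g v v' \<longleftrightarrow> v \<in> vertices g \<and> v' \<in> vertices g \<and> fst v < fst v' \<and>
     (\<forall>u \<in> vertices g. \<not> (fst v < fst u \<and> fst u < fst v'))"

definition yint :: "real \<times> real \<Rightarrow> real \<times> real \<Rightarrow> real" where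
  "yint P1 P2 = snd P1 - fst P1 * (snd P2 - snd P1) / (fst P2 - fst P1)"

definition slope :: "real \<times> real \<Rightarrow> real \<times> real \<Rightarrow> real" where
  "slope P1 P2 = (snd P2 - snd P1) / (fst P2 - fst P1)"

end

theory Submission
  imports Defs
begin

(* The iterates satisfy Q^(n+1)(z,w) = q(p^n(z), Q^n(z,w)) with ord p^n = delta^n.  Weight the
   monomial z^a w^b by alpha a + beta b, where (alpha, beta) is the inner normal of the edge of N(q)
   from (gamma, d) to (C, D).  If the lowest monomials of Q^n have weight c and z-exponents between
   L and R, then the term q_ij (p^n)^i (Q^n)^j has lowest weight alpha delta^n i + c j, attained on
   z-exponents between i delta^n + j L and i delta^n + j R.
   In case (i) the weight (alpha delta^n, c) lies strictly inside the cone spanned by the normals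
   of the two edges of N(q) at (gamma, d), so only q_(gamma d) contributes and the face of N(Q^n)
   is carried to that of N(Q^(n+1)) by x |-> gamma delta^n + d x.  In case (ii) the weight is
   delta^n (alpha, beta), the whole edge of q contributes, and its end points produce the corners.
   The numerical invariants follow from (delta - y)(delta^(n-1) + ... + y^(n-1)) = delta^n - y^n. *)

lemma sum_eq_single:
  assumes "finite A" "a \<in> A" "\<And>x. x \<in> A \<Longrightarrow> x \<noteq> a \<Longrightarrow> f x = 0"
  shows "sum f A = f a"
  using assms by (simp add: sum.remove sum.neutral)

lemma sum_sum_eq_single:
  assumes "finite A" "\<And>i. finite (B i)" "i0 \<in> A" "j0 \<in> B i0"
    and "\<And>i j. i \<in> A \<Longrightarrow> j \<in> B i \<Longrightarrow> (i, j) \<noteq> (i0, j0) \<Longrightarrow> f i j = 0"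
  shows "(\<Sum>i\<in>A. \<Sum>j\<in>B i. f i j) = f i0 j0"
proof -
  have "(\<Sum>i\<in>A. \<Sum>j\<in>B i. f i j) = (\<Sum>j\<in>B i0. f i0 j)"
    using assms by (intro sum_eq_single) (auto intro!: sum.neutral)
  also have "\<dots> = f i0 j0"
    using assms by (intro sum_eq_single) auto
  finally show ?thesis .
qed

lemma bfps_eqI: "(\<And>a b. bcoeff F a b = bcoeff G a b) \<Longrightarrow> F = G"
  unfolding bcoeff_def by (intro fps_ext) metis

lemma bcoeff_mult:
  "bcoeff (F * G) a b = (\<Sum>j\<le>b. \<Sum>i\<le>a. bcoeff F i j * bcoeff G (a - i) (b - j))"
  unfolding bcoeff_def by (simp add: fps_mult_nth fps_sum_nth atLeast0AtMost)

lemma bcoeff_fps_const: "bcoeff (fps_const R) a b = (if b = 0 then fps_nth R a else 0)"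
  unfolding bcoeff_def by (cases b) auto

lemma bcoeff_bsubst:
  "bcoeff (bsubst q P G) a b =
     (\<Sum>i\<le>a+b. \<Sum>j\<le>a+b-i. bcoeff q i j * bcoeff (fps_const P ^ i * G ^ j) a b)"
  unfolding bsubst_def by (simp add: bcoeff_def fps_sum_nth mult.assoc)

lemma bcoeff_bsubst_single:
  assumes "i0 + j0 \<le> a + b"
    and "\<And>i j. (i, j) \<noteq> (i0, j0) \<Longrightarrow> bcoeff q i j * bcoeff (fps_const P ^ i * G ^ j) a b = 0"
  shows "bcoeff (bsubst q P G) a b = bcoeff q i0 j0 * bcoeff (fps_const P ^ i0 * G ^ j0) a b"
  unfolding bcoeff_bsubst using assms by (subst sum_sum_eq_single[of _ _ i0 j0]) auto

lemma bsubst_X_X: "bsubst q fps_X fps_X = q"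
proof (rule bfps_eqI)
  fix a b
  have X: "bcoeff (fps_const fps_X ^ i * fps_X ^ j) a b = (if a = i \<and> b = j then 1 else 0)" for i j
    unfolding bcoeff_def fps_const_power fps_X_power_mult_right_nth
    by (cases "b < j") (auto simp: fps_nth_fps_const)
  show "bcoeff (bsubst q fps_X fps_X) a b = bcoeff q a b"
    unfolding bcoeff_bsubst X by (subst sum_sum_eq_single[of _ _ a b]) auto
qed

lemma subdegree_fps_compose:
  fixes f g :: "'a::idom fps"
  assumes "f \<noteq> 0" "g \<noteq> 0" "fps_nth g 0 = 0"
  shows "f oo g \<noteq> 0 \<and> subdegree (f oo g) = subdegree f * subdegree g"
proof -
  let ?a = "subdegree f" and ?b = "subdegree g"
  have b: "?b \<ge> 1"
    using assms subdegree_eq_0_iff[of g] by (simp add: Suc_le_eq)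
  have vanish: "fps_nth f i * fps_nth (g ^ i) t = 0" if "t \<le> ?a * ?b" "i \<noteq> ?a \<or> t < ?a * ?b" for i t
  proof (cases "i < ?a")
    case False
    with that have "?a * ?b < i * ?b \<or> t < ?a * ?b" using b by auto
    then have "t < i * ?b"
      using that False by (meson le_less_trans less_le_trans mult_le_mono1 not_less)
    then show ?thesis
      by (simp add: nth_less_subdegree_zero subdegree_power)
  qed (simp add: nth_less_subdegree_zero)
  have "fps_nth (f oo g) (?a * ?b) = fps_nth f ?a * fps_nth (g ^ ?a) (?a * ?b)"
    unfolding fps_compose_nth using b vanish by (intro sum_eq_single) auto
  also have "\<dots> \<noteq> 0"
    using assms nth_subdegree_nonzero[of "g ^ ?a"] by (simp add: subdegree_power)
  finally have nz: "fps_nth (f oo g) (?a * ?b) \<noteq> 0" .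
  have "fps_nth (f oo g) t = 0" if "t < ?a * ?b" for t
    unfolding fps_compose_nth using that vanish by (intro sum.neutral) auto
  with nz show ?thesis
    by (metis fps_nonzero_nth subdegreeI)
qed

lemma subdegree_piter:
  assumes "p \<noteq> 0" "subdegree p = \<delta>" "\<delta> \<ge> 1"
  shows "piter p n \<noteq> 0 \<and> subdegree (piter p n) = \<delta> ^ n"
proof (induction n)
  case (Suc n)
  have "0 < subdegree (piter p n)"
    using Suc assms(3) by simp
  then have "fps_nth (piter p n) 0 = 0"
    by (rule nth_less_subdegree_zero)
  then have "p oo piter p n \<noteq> 0 \<and> subdegree (p oo piter p n) = \<delta> * \<delta> ^ n"
    using subdegree_fps_compose[OF assms(1)] Suc assms(2) by simp
  then show ?case
    by simp
qed simp

(* The face of N(F) with inner normal (u, v) lies on the line u x + v y = m, between x = l and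
   x = r. *)
definition weighted_face :: "nat \<Rightarrow> nat \<Rightarrow> bfps \<Rightarrow> nat \<Rightarrow> nat \<Rightarrow> nat \<Rightarrow> bool" where
  "weighted_face u v F m l r \<longleftrightarrow> (\<forall>a b. bcoeff F a b \<noteq> 0 \<longrightarrow>
      m < u * a + v * b \<or> (u * a + v * b = m \<and> l \<le> a \<and> a \<le> r))"

lemma weighted_face_weight_ge:
  "weighted_face u v F m l r \<Longrightarrow> bcoeff F a b \<noteq> 0 \<Longrightarrow> m \<le> u * a + v * b"
  unfolding weighted_face_def by (metis less_imp_le order.refl)

lemma weighted_face_widen:
  "weighted_face u v F m l r \<Longrightarrow> l' \<le> l \<Longrightarrow> r \<le> r' \<Longrightarrow> weighted_face u v F m l' r'"
  unfolding weighted_face_def by fastforce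

lemma weighted_face_mult_term:
  assumes F: "weighted_face u v F m1 l1 r1" and G: "weighted_face u v G m2 l2 r2"
    and ij: "i \<le> a" "j \<le> b" "bcoeff F i j \<noteq> 0" "bcoeff G (a - i) (b - j) \<noteq> 0"
  shows "m1 + m2 < u * a + v * b \<or> (u * a + v * b = m1 + m2 \<and> u * i + v * j = m1 \<and>
           l1 \<le> i \<and> i \<le> r1 \<and> l2 \<le> a - i \<and> a - i \<le> r2)"
proof -
  have "u * i \<le> u * a" "v * j \<le> v * b"
    using ij by simp_all
  then have split: "u * a + v * b = (u * i + v * j) + (u * (a - i) + v * (b - j))"
    unfolding diff_mult_distrib2 by arith
  have "m1 < u * i + v * j \<or> (u * i + v * j = m1 \<and> l1 \<le> i \<and> i \<le> r1)"
    using F ij(3) unfolding weighted_face_def by blast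
  moreover have "m2 < u * (a - i) + v * (b - j) \<or>
      (u * (a - i) + v * (b - j) = m2 \<and> l2 \<le> a - i \<and> a - i \<le> r2)"
    using G ij(4) unfolding weighted_face_def by blast
  ultimately show ?thesis
    using split by auto
qed

lemma weighted_face_mult:
  assumes "weighted_face u v F m1 l1 r1" "weighted_face u v G m2 l2 r2"
  shows "weighted_face u v (F * G) (m1 + m2) (l1 + l2) (r1 + r2)"
  unfolding weighted_face_def
proof (intro allI impI)
  fix a b assume "bcoeff (F * G) a b \<noteq> 0"
  then obtain j i where "j \<le> b" "i \<le> a" "bcoeff F i j * bcoeff G (a - i) (b - j) \<noteq> 0"
    unfolding bcoeff_mult by (meson atMost_iff sum.not_neutral_contains_not_neutral)
  with weighted_face_mult_term[OF assms, of i a j b]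
  show "m1 + m2 < u * a + v * b \<or> (u * a + v * b = m1 + m2 \<and> l1 + l2 \<le> a \<and> a \<le> r1 + r2)"
    by auto
qed

lemma bcoeff_mult_left_corner:
  assumes F: "weighted_face u v F m1 l1 r1" and G: "weighted_face u v G m2 l2 r2" and "v > 0"
    and "u * l1 + v * y1 = m1" "u * l2 + v * y2 = m2"
  shows "bcoeff (F * G) (l1 + l2) (y1 + y2) = bcoeff F l1 y1 * bcoeff G l2 y2"
proof -
  have "bcoeff F i j * bcoeff G (l1 + l2 - i) (y1 + y2 - j) = 0"
    if "j \<le> y1 + y2" "i \<le> l1 + l2" "(j, i) \<noteq> (y1, l1)" for j i
  proof (rule ccontr)
    assume "\<not> ?thesis"
    with weighted_face_mult_term[OF F G, of i "l1 + l2" j "y1 + y2"] that assms(4,5)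
    have "u * i + v * j = m1" "i = l1" by (auto simp: algebra_simps)
    with assms(3,4) that(3) show False by auto
  qed
  then show ?thesis
    unfolding bcoeff_mult by (subst sum_sum_eq_single[of _ _ y1 l1]) auto
qed

lemma bcoeff_mult_right_corner:
  assumes F: "weighted_face u v F m1 l1 r1" and G: "weighted_face u v G m2 l2 r2" and "v > 0"
    and "u * r1 + v * y1 = m1" "u * r2 + v * y2 = m2"
  shows "bcoeff (F * G) (r1 + r2) (y1 + y2) = bcoeff F r1 y1 * bcoeff G r2 y2"
proof -
  have "bcoeff F i j * bcoeff G (r1 + r2 - i) (y1 + y2 - j) = 0"
    if "j \<le> y1 + y2" "i \<le> r1 + r2" "(j, i) \<noteq> (y1, r1)" for j i
  proof (rule ccontr)
    assume "\<not> ?thesis"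
    with weighted_face_mult_term[OF F G, of i "r1 + r2" j "y1 + y2"] that assms(4,5)
    have "u * i + v * j = m1" "i = r1" by (auto simp: algebra_simps)
    with assms(3,4) that(3) show False by auto
  qed
  then show ?thesis
    unfolding bcoeff_mult by (subst sum_sum_eq_single[of _ _ y1 r1]) auto
qed

lemma weighted_face_power:
  assumes F: "weighted_face u v F m l r" and "v > 0" "u * l + v * yl = m" "u * r + v * yr = m"
  shows "weighted_face u v (F ^ n) (n * m) (n * l) (n * r)
    \<and> bcoeff (F ^ n) (n * l) (n * yl) = bcoeff F l yl ^ n
    \<and> bcoeff (F ^ n) (n * r) (n * yr) = bcoeff F r yr ^ n"
proof (induction n)
  case 0
  have "weighted_face u v 1 0 0 0"
    unfolding weighted_face_def bcoeff_def by (auto simp: fps_one_nth split: if_splits)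
  then show ?case
    by (simp add: bcoeff_def)
next
  case (Suc n)
  have W: "weighted_face u v (F ^ n) (n * m) (n * l) (n * r)"
    using Suc by blast
  have "u * (n * l) + v * (n * yl) = n * m" "u * (n * r) + v * (n * yr) = n * m"
    using assms(3,4) by (metis add_mult_distrib2 mult.left_commute)+
  with Suc weighted_face_mult[OF F W] bcoeff_mult_left_corner[OF F W assms(2,3)]
    bcoeff_mult_right_corner[OF F W assms(2,4)]
  show ?case
    by simp
qed

lemma weighted_face_fps_const:
  assumes "R \<noteq> 0" "u > 0"
  shows "weighted_face u v (fps_const R) (u * subdegree R) (subdegree R) (subdegree R)
    \<and> bcoeff (fps_const R) (subdegree R) 0 \<noteq> 0"
proof
  show "bcoeff (fps_const R) (subdegree R) 0 \<noteq> 0"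
    using assms(1) by (simp add: bcoeff_fps_const)
  have "subdegree R \<le> a" if "fps_nth R a \<noteq> 0" for a
    using that nth_less_subdegree_zero[of a R] by (meson not_le)
  then show "weighted_face u v (fps_const R) (u * subdegree R) (subdegree R) (subdegree R)"
    using assms(2) unfolding weighted_face_def bcoeff_fps_const
    by (metis le_antisym le_neq_implies_less mult.commute mult_0_right mult_less_mono1 add_0_right)
qed

lemma weighted_face_subst_term:
  assumes uv: "u > 0" "v > 0" and P: "P \<noteq> 0" "subdegree P = D0"
    and G: "weighted_face u v G c L R" "bcoeff G L yL \<noteq> 0" "bcoeff G R yR \<noteq> 0"
      "u * L + v * yL = c" "u * R + v * yR = c"
  shows "weighted_face u v (fps_const P ^ i * G ^ j) (u * (i * D0) + j * c) (i * D0 + j * L) (i * D0 + j * R)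
    \<and> bcoeff (fps_const P ^ i * G ^ j) (i * D0 + j * L) (j * yL) \<noteq> 0
    \<and> bcoeff (fps_const P ^ i * G ^ j) (i * D0 + j * R) (j * yR) \<noteq> 0"
proof -
  have Pi: "weighted_face u v (fps_const P ^ i) (u * (i * D0)) (i * D0) (i * D0)"
    "bcoeff (fps_const P ^ i) (i * D0) 0 \<noteq> 0"
    using weighted_face_fps_const[of "P ^ i" u v] P uv by (simp_all add: fps_const_power)
  have Gj: "weighted_face u v (G ^ j) (j * c) (j * L) (j * R)"
    "bcoeff (G ^ j) (j * L) (j * yL) \<noteq> 0" "bcoeff (G ^ j) (j * R) (j * yR) \<noteq> 0"
    using weighted_face_power[OF G(1) uv(2) G(4,5), of j] G(2,3) by simp_all
  have "u * (j * L) + v * (j * yL) = j * c" "u * (j * R) + v * (j * yR) = j * c"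
    using G(4,5) by (metis add_mult_distrib2 mult.left_commute)+
  then show ?thesis
    using weighted_face_mult[OF Pi(1) Gj(1)] Pi(2) Gj(2,3)
      bcoeff_mult_left_corner[OF Pi(1) Gj(1) uv(2), of 0 "j * yL"]
      bcoeff_mult_right_corner[OF Pi(1) Gj(1) uv(2), of 0 "j * yR"]
    by simp
qed

lemma weighted_face_bsubst:
  fixes u v D0 c L R yL yR g d g' d' :: nat
  assumes uv: "u > 0" "v > 0"
    and P: "P \<noteq> 0" "subdegree P = D0" "D0 \<ge> 1"
    and G: "weighted_face u v G c L R" "bcoeff G L yL \<noteq> 0" "bcoeff G R yR \<noteq> 0"
      "u * L + v * yL = c" "u * R + v * yR = c" "c > 0"
    and q: "bcoeff q g d \<noteq> 0" "bcoeff q g' d' \<noteq> 0"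
    and min: "\<And>i j. bcoeff q i j \<noteq> 0 \<Longrightarrow> u * (g * D0) + d * c \<le> u * (i * D0) + j * c"
    and min': "u * (g' * D0) + d' * c = u * (g * D0) + d * c"
    and left: "\<And>i j. bcoeff q i j \<noteq> 0 \<Longrightarrow> u * (i * D0) + j * c = u * (g * D0) + d * c \<Longrightarrow>
      (i, j) \<noteq> (g, d) \<Longrightarrow> g * D0 + d * L < i * D0 + j * L"
    and right: "\<And>i j. bcoeff q i j \<noteq> 0 \<Longrightarrow> u * (i * D0) + j * c = u * (g * D0) + d * c \<Longrightarrow>
      (i, j) \<noteq> (g', d') \<Longrightarrow> i * D0 + j * R < g' * D0 + d' * R"
  shows "weighted_face u v (bsubst q P G) (u * (g * D0) + d * c) (g * D0 + d * L) (g' * D0 + d' * R)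
    \<and> bcoeff (bsubst q P G) (g * D0 + d * L) (d * yL) \<noteq> 0
    \<and> bcoeff (bsubst q P G) (g' * D0 + d' * R) (d' * yR) \<noteq> 0"
proof -
  define M where "M = u * (g * D0) + d * c"
  define T where "T i j = fps_const P ^ i * G ^ j" for i j
  note T = weighted_face_subst_term[OF uv P(1,2) G(1-5), folded T_def]
  have contribution: "M < u * a + v * b \<or> (u * (i * D0) + j * c = M \<and> u * a + v * b = M
      \<and> i * D0 + j * L \<le> a \<and> a \<le> i * D0 + j * R)"
    if "bcoeff q i j * bcoeff (T i j) a b \<noteq> 0" for i j a b
  proof -
    have "M \<le> u * (i * D0) + j * c"
      using min that unfolding M_def by simp
    then show ?thesis
      using T[of i j] that unfolding weighted_face_def by force
  qed
  have "L + yL \<ge> 1" "R + yR \<ge> 1"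
    using G(4,5,6) by (auto simp: Suc_le_eq intro!: gr0I)
  then have "g + d \<le> g * D0 + d * (L + yL)" "g' + d' \<le> g' * D0 + d' * (R + yR)"
    using P(3) by (simp_all add: add_mono)
  then have ranges: "g + d \<le> (g * D0 + d * L) + d * yL" "g' + d' \<le> (g' * D0 + d' * R) + d' * yR"
    by (simp_all add: algebra_simps)
  have lines: "u * (j * L) + v * (j * yL) = j * c" "u * (j * R) + v * (j * yR) = j * c" for j
    using G(4,5) by (metis add_mult_distrib2 mult.left_commute)+
  have wL: "u * (g * D0 + d * L) + v * (d * yL) = M" and wR: "u * (g' * D0 + d' * R) + v * (d' * yR) = M"
    using lines[of d] lines[of d'] min' unfolding M_def by (simp_all add: algebra_simps)
  have "bcoeff (bsubst q P G) (g * D0 + d * L) (d * yL) = bcoeff q g d * bcoeff (T g d) (g * D0 + d * L) (d * yL)"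
    unfolding T_def
  proof (rule bcoeff_bsubst_single[OF ranges(1)])
    fix i j assume "(i, j) \<noteq> (g, d)"
    then show "bcoeff q i j * bcoeff (fps_const P ^ i * G ^ j) (g * D0 + d * L) (d * yL) = 0"
      using contribution[of i j] left[of i j] wL unfolding M_def T_def by fastforce
  qed
  moreover have "bcoeff (bsubst q P G) (g' * D0 + d' * R) (d' * yR)
      = bcoeff q g' d' * bcoeff (T g' d') (g' * D0 + d' * R) (d' * yR)"
    unfolding T_def
  proof (rule bcoeff_bsubst_single[OF ranges(2)])
    fix i j assume "(i, j) \<noteq> (g', d')"
    then show "bcoeff q i j * bcoeff (fps_const P ^ i * G ^ j) (g' * D0 + d' * R) (d' * yR) = 0"
      using contribution[of i j] right[of i j] wR unfolding M_def T_def by fastforce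
  qed
  moreover have "weighted_face u v (bsubst q P G) M (g * D0 + d * L) (g' * D0 + d' * R)"
    unfolding weighted_face_def
  proof (intro allI impI)
    fix a b assume "bcoeff (bsubst q P G) a b \<noteq> 0"
    then obtain i j where ij: "bcoeff q i j * bcoeff (T i j) a b \<noteq> 0"
      unfolding bcoeff_bsubst T_def by (meson sum.not_neutral_contains_not_neutral)
    then have "bcoeff q i j \<noteq> 0" by simp
    then have "g * D0 + d * L \<le> i * D0 + j * L" "i * D0 + j * R \<le> g' * D0 + d' * R"
      if "u * (i * D0) + j * c = M"
      using left[of i j] right[of i j] that unfolding M_def
      by (cases "(i, j) = (g, d)"; cases "(i, j) = (g', d')"; fastforce)+
    with contribution[OF ij] show "M < u * a + v * b \<or> (u * a + v * b = M \<and> g * D0 + d * L \<le> a \<and> a \<le> g' * D0 + d' * R)"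
      by auto
  qed
  ultimately show ?thesis
    using q T unfolding M_def by simp
qed

lemma convex_insert_strict_superlevel:
  fixes c :: "'a::real_inner"
  shows "convex (insert p {x. inner c p < inner c x})"
proof (rule convexI)
  fix x y :: 'a and s t :: real
  assume xy: "x \<in> insert p {x. inner c p < inner c x}" "y \<in> insert p {x. inner c p < inner c x}"
    and st: "0 \<le> s" "0 \<le> t" "s + t = 1"
  consider "s = 0" | "t = 0" | "x = p" "y = p" | "0 < s" "0 < t" "x \<noteq> p \<or> y \<noteq> p"
    using st by linarith
  then show "s *\<^sub>R x + t *\<^sub>R y \<in> insert p {x. inner c p < inner c x}"
  proof cases
    case 3
    then show ?thesis
      using st by (simp add: scaleR_left_distrib[symmetric])
  next
    case 4
    have "s * inner c p \<le> s * inner c x" "t * inner c p \<le> t * inner c y"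
      using xy st by (auto intro!: mult_left_mono)
    moreover have "s * inner c p < s * inner c x \<or> t * inner c p < t * inner c y"
      using xy 4 by auto
    ultimately have "(s + t) * inner c p < inner c (s *\<^sub>R x + t *\<^sub>R y)"
      by (auto simp: inner_add_right distrib_right intro: add_less_le_mono add_le_less_mono)
    then show ?thesis
      using st by simp
  qed (use xy st in auto)
qed

lemma extreme_point_of_strict_minimizer:
  fixes c :: "'a::real_inner"
  assumes "p \<in> K" "\<And>x. x \<in> K \<Longrightarrow> x \<noteq> p \<Longrightarrow> inner c p < inner c x"
  shows "p extreme_point_of K"
  unfolding extreme_point_of_def
proof (intro conjI ballI notI)
  fix A B assume AB: "A \<in> K" "B \<in> K" "p \<in> open_segment A B"
  then obtain t where t: "A \<noteq> B" "0 < t" "t < 1" "p = (1 - t) *\<^sub>R A + t *\<^sub>R B"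
    unfolding in_segment by blast
  have ge: "inner c p \<le> inner c x" if "x \<in> K" for x
    using assms(2)[OF that] by (cases "x = p") auto
  have "(1 - t) * inner c p \<le> (1 - t) * inner c A" "t * inner c p \<le> t * inner c B"
    using ge AB t by (auto intro!: mult_left_mono)
  moreover have "inner c p < inner c A \<or> inner c p < inner c B"
    using assms(2) AB(1,2) t(1) by blast
  then have "(1 - t) * inner c p < (1 - t) * inner c A \<or> t * inner c p < t * inner c B"
    using t(2,3) by simp
  moreover have "(1 - t) * inner c p + t * inner c p = inner c p"
    by (simp add: algebra_simps)
  ultimately have "inner c p < (1 - t) * inner c A + t * inner c B"
    by auto
  then show False
    using t(4) by (simp add: inner_add_right)
qed (fact assms(1))

definition support_quadrants :: "bfps \<Rightarrow> (real \<times> real) set" where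
  "support_quadrants g = \<Union>{{(x, y). real i \<le> x \<and> real j \<le> y} | i j. bcoeff g i j \<noteq> 0}"

lemma newton_polygon_eq: "newton_polygon g = convex hull support_quadrants g"
  unfolding newton_polygon_def support_quadrants_def ..

lemma mem_support_quadrants:
  "P \<in> support_quadrants g \<longleftrightarrow> (\<exists>i j. bcoeff g i j \<noteq> 0 \<and> real i \<le> fst P \<and> real j \<le> snd P)"
  unfolding support_quadrants_def by (cases P) auto

lemma newton_polygon_subset:
  assumes "convex S" "\<And>i j x y. bcoeff g i j \<noteq> 0 \<Longrightarrow> real i \<le> x \<Longrightarrow> real j \<le> y \<Longrightarrow> (x, y) \<in> S"
  shows "newton_polygon g \<subseteq> S"
  unfolding newton_polygon_eq
  by (rule hull_minimal) (use assms in \<open>auto simp: mem_support_quadrants\<close>)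

lemma quadrant_in_newton_polygon:
  "bcoeff g i j \<noteq> 0 \<Longrightarrow> real i \<le> x \<Longrightarrow> real j \<le> y \<Longrightarrow> (x, y) \<in> newton_polygon g"
  unfolding newton_polygon_eq by (rule hull_inc) (auto simp: mem_support_quadrants)

lemma newton_polygon_upward:
  assumes "P \<in> newton_polygon g" "h \<ge> 0"
  shows "P + (0, h) \<in> newton_polygon g"
proof -
  have "{P. P + (0, h) \<in> newton_polygon g} = (+) (0, - h) ` newton_polygon g"
    by (force simp: image_iff)
  then have "convex {P. P + (0, h) \<in> newton_polygon g}"
    unfolding newton_polygon_eq by (simp add: convex_translation)
  moreover have "(x, y) + (0, h) \<in> newton_polygon g"
    if "bcoeff g i j \<noteq> 0" "real i \<le> x" "real j \<le> y" for i j x y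
    using quadrant_in_newton_polygon[OF that(1,2), of "y + h"] that(3) assms(2) by simp
  ultimately show ?thesis
    using newton_polygon_subset[of "{P. P + (0, h) \<in> newton_polygon g}" g] assms(1) by blast
qed

lemma newton_polygon_weight_ge:
  assumes "a \<ge> 0" "b \<ge> 0" "\<And>i j. bcoeff g i j \<noteq> 0 \<Longrightarrow> m \<le> a * real i + b * real j"
    and "P \<in> newton_polygon g"
  shows "m \<le> a * fst P + b * snd P"
proof -
  have "{P. m \<le> a * fst P + b * snd P} = {P. inner (a, b) P \<ge> m}"
    by (simp add: inner_prod_def)
  then have "convex {P. m \<le> a * fst P + b * snd P}"
    using convex_halfspace_ge by metis
  moreover have "m \<le> a * x + b * y" if "bcoeff g i j \<noteq> 0" "real i \<le> x" "real j \<le> y" for i j x y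
    using assms(3)[OF that(1)] that(2,3) assms(1,2) mult_left_mono[of "real i" x a] mult_left_mono[of "real j" y b]
    by linarith
  ultimately show ?thesis
    using newton_polygon_subset[of "{P. m \<le> a * fst P + b * snd P}" g] assms(4) by auto
qed

lemma extreme_point_of_newton_polygon:
  fixes a b :: nat
  assumes ab: "a > 0" "b > 0" and p: "bcoeff g i0 j0 \<noteq> 0"
    and min: "\<And>i j. bcoeff g i j \<noteq> 0 \<Longrightarrow> (i, j) \<noteq> (i0, j0) \<Longrightarrow> a * i0 + b * j0 < a * i + b * j"
  shows "(real i0, real j0) extreme_point_of newton_polygon g"
proof -
  define w where "w x = inner (real a, real b) x" for x
  have "(x, y) \<in> insert (real i0, real j0) {x. w (real i0, real j0) < w x}"
    if "bcoeff g i j \<noteq> 0" "real i \<le> x" "real j \<le> y" for i j x y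
  proof (cases "(i, j) = (i0, j0)")
    case True
    have "w (real i0, real j0) < w (x, y)" if "(x, y) \<noteq> (real i0, real j0)"
    proof -
      have "real i0 < x \<or> real j0 < y"
        using True \<open>real i \<le> x\<close> \<open>real j \<le> y\<close> that by auto
      then show ?thesis
        unfolding w_def using True \<open>real i \<le> x\<close> \<open>real j \<le> y\<close> ab
        by (auto intro: add_less_le_mono add_le_less_mono mult_left_mono)
    qed
    then show ?thesis
      by auto
  next
    case False
    have "real (a * i0 + b * j0) < real (a * i + b * j)"
      using min[OF that(1) False] by (simp only: of_nat_less_iff)
    also have "\<dots> \<le> w (x, y)"
      unfolding w_def using that(2,3) by (auto intro!: add_mono mult_left_mono)
    finally show ?thesis
      unfolding w_def by simp
  qed
  then have "newton_polygon g \<subseteq> insert (real i0, real j0) {x. w (real i0, real j0) < w x}"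
    unfolding w_def by (intro newton_polygon_subset convex_insert_strict_superlevel)
  moreover have "(real i0, real j0) \<in> newton_polygon g"
    using quadrant_in_newton_polygon[OF p] by simp
  ultimately show ?thesis
    unfolding w_def by (intro extreme_point_of_strict_minimizer[where c = "(real a, real b)"]) auto
qed

lemma not_extreme_point_between:
  assumes A: "A \<in> newton_polygon g" and B: "B \<in> newton_polygon g"
    and X: "fst A < fst X" "fst X < fst B" and "b > 0"
    and wA: "a * fst A + b * snd A \<le> a * fst X + b * snd X"
    and wB: "a * fst B + b * snd B \<le> a * fst X + b * snd X"
  shows "\<not> X extreme_point_of newton_polygon g"
proof
  assume ext: "X extreme_point_of newton_polygon g"
  define t where "t = (fst X - fst A) / (fst B - fst A)"
  define S where "S = (1 - t) *\<^sub>R A + t *\<^sub>R B"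
  have t: "0 < t" "t < 1"
    using X by (auto simp: t_def divide_simps)
  have "t * (fst B - fst A) = fst X - fst A"
    using X by (simp add: t_def)
  then have fst_S: "fst S = fst X"
    by (simp add: S_def algebra_simps)
  have S: "S \<in> newton_polygon g"
    unfolding S_def newton_polygon_eq using A B t
    by (intro convexD[OF convex_convex_hull]) (auto simp: newton_polygon_eq)
  have "a * fst S + b * snd S = (1 - t) * (a * fst A + b * snd A) + t * (a * fst B + b * snd B)"
    by (simp add: S_def algebra_simps)
  also have "\<dots> \<le> (1 - t) * (a * fst X + b * snd X) + t * (a * fst X + b * snd X)"
    using t by (intro add_mono mult_left_mono wA wB) auto
  finally have "snd S \<le> snd X"
    using fst_S \<open>b > 0\<close> by (simp add: algebra_simps)
  then consider "X = S" | "snd S < snd X"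
    using fst_S by (cases X, cases S) fastforce
  then show False
  proof cases
    case 1
    then have "X \<in> open_segment A B"
      unfolding in_segment S_def using X t by auto
    then show False
      using ext A B unfolding extreme_point_of_def by blast
  next
    case 2
    define h where "h = snd X - snd S"
    have "S + (0, 2 * h) \<in> newton_polygon g"
      using newton_polygon_upward[OF S] 2 by (simp add: h_def)
    moreover have "X \<in> open_segment S (S + (0, 2 * h))"
      unfolding in_segment using 2 fst_S
      by (intro conjI exI[of _ "1/2"]) (auto simp: prod_eq_iff h_def algebra_simps)
    ultimately show False
      using ext S unfolding extreme_point_of_def by blast
  qed
qed

lemma vertex_support:
  assumes "(real a, real b) extreme_point_of newton_polygon g"
  shows "bcoeff g a b \<noteq> 0"
proof -
  have ext: "(real a, real b) \<notin> open_segment A B" if "A \<in> newton_polygon g" "B \<in> newton_polygon g" for A B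
    using assms that unfolding extreme_point_of_def by blast
  have "(real a, real b) \<in> support_quadrants g"
    using assms unfolding newton_polygon_eq by (rule extreme_point_of_convex_hull)
  then obtain i j where ij: "bcoeff g i j \<noteq> 0" "real i \<le> real a" "real j \<le> real b"
    unfolding mem_support_quadrants by auto
  have "i = a"
  proof (rule ccontr)
    assume "i \<noteq> a"
    then have "(real a, real b) \<in> open_segment (real i, real b) (2 * real a - real i, real b)"
      unfolding in_segment using ij(2) by (intro conjI exI[of _ "1/2"]) (auto simp: algebra_simps)
    moreover have "(real i, real b) \<in> newton_polygon g" "(2 * real a - real i, real b) \<in> newton_polygon g"
      using ij by (auto intro: quadrant_in_newton_polygon)
    ultimately show False
      using ext by blast
  qed
  moreover have "j = b"
  proof (rule ccontr)
    assume "j \<noteq> b"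
    then have "(real a, real b) \<in> open_segment (real a, real j) (real a, 2 * real b - real j)"
      unfolding in_segment using ij(3) by (intro conjI exI[of _ "1/2"]) (auto simp: algebra_simps)
    moreover have "(real a, real j) \<in> newton_polygon g" "(real a, 2 * real b - real j) \<in> newton_polygon g"
      using ij by (auto intro: quadrant_in_newton_polygon)
    ultimately show False
      using ext by blast
  qed
  ultimately show ?thesis
    using ij(1) by simp
qed

(* Tilting the weight (u, v) to (l + 1) (u, v) + (1, 0), resp. (yr + 1) (u, v) + (0, 1), makes
   the left, resp. right, corner of the face the unique minimiser on the support. *)
lemma weighted_face_left_corner_extreme:
  assumes F: "weighted_face u v g m l r" and uv: "u > 0" "v > 0"
    and c: "bcoeff g l yl \<noteq> 0" "u * l + v * yl = m"
  shows "(real l, real yl) extreme_point_of newton_polygon g"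
proof (rule extreme_point_of_newton_polygon[where a = "(l + 1) * u + 1" and b = "(l + 1) * v"])
  fix i j assume ij: "bcoeff g i j \<noteq> 0" "(i, j) \<noteq> (l, yl)"
  have w: "((l + 1) * u + 1) * k + (l + 1) * v * n = (l + 1) * (u * k + v * n) + k" for k n
    by (simp add: algebra_simps)
  have "l < i" if "u * i + v * j = m" "l \<le> i"
  proof (rule ccontr)
    assume "\<not> l < i"
    then have "i = l"
      using that(2) by simp
    then have "v * j = v * yl"
      using that(1) c(2) by (metis add_left_cancel)
    then have "j = yl"
      using uv(2) by simp
    then show False
      using ij(2) \<open>i = l\<close> by simp
  qed
  then consider "m < u * i + v * j" | "u * i + v * j = m" "l < i"
    using F ij(1) unfolding weighted_face_def by blast
  then show "((l + 1) * u + 1) * l + (l + 1) * v * yl < ((l + 1) * u + 1) * i + (l + 1) * v * j"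
  proof cases
    case 1
    then have "(l + 1) * (m + 1) \<le> (l + 1) * (u * i + v * j)"
      by (intro mult_le_mono2) simp
    then show ?thesis
      unfolding w c(2) by simp
  next
    case 2
    then show ?thesis
      unfolding w c(2) by simp
  qed
qed (use uv c in auto)

lemma weighted_face_right_corner_extreme:
  assumes F: "weighted_face u v g m l r" and uv: "u > 0" "v > 0"
    and c: "bcoeff g r yr \<noteq> 0" "u * r + v * yr = m"
  shows "(real r, real yr) extreme_point_of newton_polygon g"
proof (rule extreme_point_of_newton_polygon[where a = "(yr + 1) * u" and b = "(yr + 1) * v + 1"])
  fix i j assume ij: "bcoeff g i j \<noteq> 0" "(i, j) \<noteq> (r, yr)"
  have w: "(yr + 1) * u * k + ((yr + 1) * v + 1) * n = (yr + 1) * (u * k + v * n) + n" for k n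
    by (simp add: algebra_simps)
  have "yr < j" if "u * i + v * j = m" "i \<le> r"
  proof -
    have "u * i \<le> u * r"
      using that(2) by simp
    then have "v * yr \<le> v * j"
      using that(1) c(2) by linarith
    then have "yr \<le> j"
      using uv(2) by simp
    moreover have "i = r" if "j = yr"
    proof -
      have "u * i + v * yr = u * r + v * yr"
        using that \<open>u * i + v * j = m\<close> c(2) by simp
      then have "u * i = u * r"
        by simp
      then show ?thesis
        using uv(1) by simp
    qed
    ultimately show ?thesis
      using ij(2) by fastforce
  qed
  then consider "m < u * i + v * j" | "u * i + v * j = m" "yr < j"
    using F ij(1) unfolding weighted_face_def by blast
  then show "(yr + 1) * u * r + ((yr + 1) * v + 1) * yr < (yr + 1) * u * i + ((yr + 1) * v + 1) * j"
  proof cases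
    case 1
    then have "(yr + 1) * (m + 1) \<le> (yr + 1) * (u * i + v * j)"
      by (intro mult_le_mono2) simp
    then show ?thesis
      unfolding w c(2) by simp
  next
    case 2
    then show ?thesis
      unfolding w c(2) by simp
  qed
qed (use uv c in auto)

lemma next_vertex_of_weighted_face:
  assumes F: "weighted_face u v g m l r" and uv: "u > 0" "v > 0"
    and c: "bcoeff g l yl \<noteq> 0" "bcoeff g r yr \<noteq> 0" "u * l + v * yl = m" "u * r + v * yr = m"
    and "l < r"
  shows "next_vertex g (real l, real yl) (real r, real yr)"
  unfolding next_vertex_def
proof (intro conjI ballI notI)
  have L: "(real l, real yl) extreme_point_of newton_polygon g"
    by (rule weighted_face_left_corner_extreme[OF F uv c(1,3)])
  have R: "(real r, real yr) extreme_point_of newton_polygon g"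
    by (rule weighted_face_right_corner_extreme[OF F uv c(2,4)])
  show "(real l, real yl) \<in> vertices g" "(real r, real yr) \<in> vertices g"
    using L R by (simp_all add: vertices_def)
  show "fst (real l, real yl) < fst (real r, real yr)"
    using \<open>l < r\<close> by simp
  fix W assume "W \<in> vertices g"
    and between: "fst (real l, real yl) < fst W \<and> fst W < fst (real r, real yr)"
  then have W: "W extreme_point_of newton_polygon g"
    by (simp add: vertices_def)
  have "real m \<le> real u * real i + real v * real j" if "bcoeff g i j \<noteq> 0" for i j
  proof -
    have "m \<le> u * i + v * j"
      using F that unfolding weighted_face_def by fastforce
    then show ?thesis
      by (metis of_nat_add of_nat_le_iff of_nat_mult)
  qed
  then have "real m \<le> real u * fst W + real v * snd W"
    using W by (intro newton_polygon_weight_ge) (auto simp: extreme_point_of_def)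
  moreover have "real u * real l + real v * real yl = real m" "real u * real r + real v * real yr = real m"
    using c(3,4) by (metis of_nat_add of_nat_mult)+
  ultimately show False
    using not_extreme_point_between[where A = "(real l, real yl)" and B = "(real r, real yr)"
        and X = W and g = g and a = "real u" and b = "real v"] L R W between uv
    by (auto simp: extreme_point_of_def)
qed

lemma slope_yint_of_line:
  fixes a b c x1 y1 x2 y2 :: real
  assumes "a * x1 + b * y1 = c" "a * x2 + b * y2 = c" "x1 \<noteq> x2" "b \<noteq> 0"
  shows "slope (x1, y1) (x2, y2) = - (a / b) \<and> yint (x1, y1) (x2, y2) = c / b"
proof -
  have "b * (y2 - y1) = - a * (x2 - x1)"
    using assms(1,2) by (simp add: algebra_simps)
  then have s: "(y2 - y1) / (x2 - x1) = - (a / b)"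
    using assms(3,4) by (simp add: field_simps)
  have "yint (x1, y1) (x2, y2) = y1 - x1 * ((y2 - y1) / (x2 - x1))"
    unfolding yint_def by simp
  also have "\<dots> = y1 + x1 * (a / b)"
    unfolding s by simp
  also have "\<dots> = c / b"
    using assms(1,4) by (simp add: field_simps)
  finally show ?thesis
    using s by (simp add: slope_def)
qed

lemma weighted_face_edge:
  assumes F: "weighted_face u v g m l r" and uv: "u > 0" "v > 0"
    and c: "bcoeff g l yl \<noteq> 0" "bcoeff g r yr \<noteq> 0" "u * l + v * yl = m" "u * r + v * yr = m"
    and "l < r"
  shows "next_vertex g (real l, real yl) (real r, real yr)
    \<and> slope (real l, real yl) (real r, real yr) = - (real u / real v)
    \<and> yint (real l, real yl) (real r, real yr) = real m / real v"
proof -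
  have "real u * real l + real v * real yl = real m" "real u * real r + real v * real yr = real m"
    using c(3,4) by (metis of_nat_add of_nat_mult)+
  then show ?thesis
    using next_vertex_of_weighted_face[OF assms] slope_yint_of_line[of "real u" "real l" "real v" "real yl"]
      \<open>l < r\<close> uv by simp
qed

lemma yint_edge_compare:
  assumes "C = \<gamma> + \<beta>" "d = D + \<alpha>" "\<beta> > 0"
  shows "yint (real \<gamma>, real d) (real C, real D) < real \<delta> \<longleftrightarrow> \<alpha> * \<gamma> + \<beta> * d < \<beta> * \<delta>"
    and "real \<delta> \<le> yint (real \<gamma>, real d) (real C, real D) \<longleftrightarrow> \<beta> * \<delta> \<le> \<alpha> * \<gamma> + \<beta> * d"
    and "real \<delta> = yint (real \<gamma>, real d) (real C, real D) \<longleftrightarrow> \<alpha> * \<gamma> + \<beta> * d = \<beta> * \<delta>"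
proof -
  have "real \<alpha> * real \<gamma> + real \<beta> * real d = real (\<alpha> * \<gamma> + \<beta> * d)"
    "real \<alpha> * real C + real \<beta> * real D = real (\<alpha> * \<gamma> + \<beta> * d)"
    using assms(1,2) by (simp_all add: algebra_simps)
  then have yint: "yint (real \<gamma>, real d) (real C, real D) = real (\<alpha> * \<gamma> + \<beta> * d) / real \<beta>"
    using slope_yint_of_line assms by simp
  show "yint (real \<gamma>, real d) (real C, real D) < real \<delta> \<longleftrightarrow> \<alpha> * \<gamma> + \<beta> * d < \<beta> * \<delta>"
    "real \<delta> \<le> yint (real \<gamma>, real d) (real C, real D) \<longleftrightarrow> \<beta> * \<delta> \<le> \<alpha> * \<gamma> + \<beta> * d"
    "real \<delta> = yint (real \<gamma>, real d) (real C, real D) \<longleftrightarrow> \<alpha> * \<gamma> + \<beta> * d = \<beta> * \<delta>"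
    unfolding yint using assms(3)
    by (simp_all only: divide_less_eq pos_le_divide_eq eq_divide_eq of_nat_0_less_iff
        of_nat_mult[symmetric] of_nat_less_iff of_nat_le_iff of_nat_eq_iff mult.commute simp_thms)
      auto
qed

lemma weighted_face_exists:
  assumes uv: "u > 0" "v > 0" and "bcoeff g i0 j0 \<noteq> 0"
  obtains m l r yl yr where "weighted_face u v g m l r" "bcoeff g l yl \<noteq> 0" "bcoeff g r yr \<noteq> 0"
    "u * l + v * yl = m" "u * r + v * yr = m"
proof -
  obtain i1 j1 where m_attained: "bcoeff g i1 j1 \<noteq> 0"
    and least: "\<And>i j. bcoeff g i j \<noteq> 0 \<Longrightarrow> u * i1 + v * j1 \<le> u * i + v * j"
    using ex_has_least_nat[of "\<lambda>(i, j). bcoeff g i j \<noteq> 0" "(i0, j0)" "\<lambda>(i, j). u * i + v * j"] assms(3)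
    by auto
  define m where "m = u * i1 + v * j1"
  define I where "I = {i. \<exists>j. bcoeff g i j \<noteq> 0 \<and> u * i + v * j = m}"
  have "I \<subseteq> {..m}"
    using uv(1) unfolding I_def by (auto intro: order_trans[OF _ le_add1] simp: less_eq_Suc_le)
  then have I: "finite I" "I \<noteq> {}"
    using m_attained by (auto simp: I_def m_def intro: finite_subset)
  obtain yl where l: "bcoeff g (Min I) yl \<noteq> 0" "u * Min I + v * yl = m"
    using Min_in[OF I] unfolding I_def by blast
  obtain yr where r: "bcoeff g (Max I) yr \<noteq> 0" "u * Max I + v * yr = m"
    using Max_in[OF I] unfolding I_def by blast
  have face: "weighted_face u v g m (Min I) (Max I)"
    unfolding weighted_face_def
  proof (intro allI impI)
    fix a b assume ab: "bcoeff g a b \<noteq> 0"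
    show "m < u * a + v * b \<or> (u * a + v * b = m \<and> Min I \<le> a \<and> a \<le> Max I)"
    proof (cases "u * a + v * b = m")
      case True
      then have "a \<in> I"
        unfolding I_def using ab by blast
      with I True show ?thesis
        by simp
    qed (use least[OF ab] in \<open>simp add: m_def\<close>)
  qed
  show ?thesis
    by (rule that[OF face l(1) r(1) l(2) r(2)])
qed

lemma edge_normal_weight_eq:
  fixes x y x' y' :: nat
  assumes "x < x'" "y' < y"
  shows "(y - y') * x' + (x' - x) * y' = (y - y') * x + (x' - x) * y"
proof -
  have "int ((y - y') * x' + (x' - x) * y') = int ((y - y') * x + (x' - x) * y)"
    using assms by (simp add: of_nat_diff algebra_simps)
  then show ?thesis
    by (simp only: of_nat_eq_iff)
qed

lemma vertex_above_edge:
  fixes nv mv :: "nat \<Rightarrow> nat" and s e t :: nat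
  assumes verts: "vertices q = {(real (nv i), real (mv i)) | i. i \<in> {1..s}}"
    and nv_mono: "\<forall>i\<in>{1..s}. \<forall>j\<in>{1..s}. i < j \<longrightarrow> nv i < nv j"
    and mv_mono: "\<forall>i\<in>{1..s}. \<forall>j\<in>{1..s}. i < j \<longrightarrow> mv i > mv j"
    and e: "1 \<le> e" "e < s" and t: "t \<in> {1..s}" "t \<noteq> e" "t \<noteq> e + 1"
  shows "(mv e - mv (e + 1)) * nv e + (nv (e + 1) - nv e) * mv e
    < (mv e - mv (e + 1)) * nv t + (nv (e + 1) - nv e) * mv t"
proof (rule ccontr)
  define u v where "u = mv e - mv (e + 1)" and "v = nv (e + 1) - nv e"
  define w where "w x = u * nv x + v * mv x" for x
  assume "\<not> ?thesis"
  then have le: "w t \<le> w e"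
    unfolding w_def u_def v_def by simp
  have e_in: "e \<in> {1..s}" "e + 1 \<in> {1..s}"
    using e by auto
  have lt: "nv e < nv (e + 1)" "mv (e + 1) < mv e"
    using nv_mono mv_mono e_in by auto
  have w_next: "w (e + 1) = w e"
    unfolding w_def u_def v_def using edge_normal_weight_eq[OF lt] .
  have vertex: "(real (nv x), real (mv x)) extreme_point_of newton_polygon q" if "x \<in> {1..s}" for x
    using verts that unfolding vertices_def by blast
  have between: "\<not> (real (nv x), real (mv x)) extreme_point_of newton_polygon q"
    if "a \<in> {1..s}" "b \<in> {1..s}" "nv a < nv x" "nv x < nv b" "w a \<le> w x" "w b \<le> w x" for a b x
  proof (rule not_extreme_point_between[where a = "real u" and b = "real v"])
    show "(real (nv a), real (mv a)) \<in> newton_polygon q" "(real (nv b), real (mv b)) \<in> newton_polygon q"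
      using vertex[OF that(1)] vertex[OF that(2)] by (simp_all add: extreme_point_of_def)
    have "real u * real (nv y) + real v * real (mv y) = real (w y)" for y
      by (simp add: w_def)
    then show "real u * fst (real (nv a), real (mv a)) + real v * snd (real (nv a), real (mv a))
        \<le> real u * fst (real (nv x), real (mv x)) + real v * snd (real (nv x), real (mv x))"
      "real u * fst (real (nv b), real (mv b)) + real v * snd (real (nv b), real (mv b))
        \<le> real u * fst (real (nv x), real (mv x)) + real v * snd (real (nv x), real (mv x))"
      using that(5,6) by simp_all
  qed (use that lt in \<open>simp_all add: v_def\<close>)
  consider "t < e" | "e + 1 < t"
    using t by linarith
  then show False
  proof cases
    case 1
    then have "nv t < nv e"
      using nv_mono t e_in by auto
    then show False
      using between[OF t(1) e_in(2), of e] vertex[OF e_in(1)] lt le w_next by simp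
  next
    case 2
    then have "nv (e + 1) < nv t"
      using nv_mono t e_in by auto
    then show False
      using between[OF e_in(1) t(1), of "e + 1"] vertex[OF e_in(2)] lt le w_next by simp
  qed
qed

lemma weighted_face_of_consecutive_vertices:
  fixes nv mv :: "nat \<Rightarrow> nat" and s e :: nat
  assumes verts: "vertices q = {(real (nv i), real (mv i)) | i. i \<in> {1..s}}"
    and nv_mono: "\<forall>i\<in>{1..s}. \<forall>j\<in>{1..s}. i < j \<longrightarrow> nv i < nv j"
    and mv_mono: "\<forall>i\<in>{1..s}. \<forall>j\<in>{1..s}. i < j \<longrightarrow> mv i > mv j"
    and e: "1 \<le> e" "e < s"
  shows "weighted_face (mv e - mv (e + 1)) (nv (e + 1) - nv e) q
    ((mv e - mv (e + 1)) * nv e + (nv (e + 1) - nv e) * mv e) (nv e) (nv (e + 1))"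
proof -
  define u where "u = mv e - mv (e + 1)"
  define v where "v = nv (e + 1) - nv e"
  define w where "w t = u * nv t + v * mv t" for t
  have e_in: "e \<in> {1..s}" "e + 1 \<in> {1..s}"
    using e by auto
  have lt: "nv e < nv (e + 1)" "mv (e + 1) < mv e"
    using nv_mono mv_mono e_in by auto
  have uv: "u > 0" "v > 0"
    using lt by (simp_all add: u_def v_def)
  have on_edge: "w t = w e \<and> nv e \<le> nv t \<and> nv t \<le> nv (e + 1)" if "t \<in> {1..s}" "w t \<le> w e" for t
    using vertex_above_edge[OF verts nv_mono mv_mono e that(1)] edge_normal_weight_eq[OF lt] that lt
    unfolding w_def u_def v_def by (cases "t = e \<or> t = e + 1") auto
  have vertex_index: "\<exists>t\<in>{1..s}. i = nv t \<and> j = mv t"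
    if "(real i, real j) extreme_point_of newton_polygon q" for i j
  proof -
    have "(real i, real j) \<in> vertices q"
      using that by (simp add: vertices_def)
    then obtain t where "t \<in> {1..s}" "(real i, real j) = (real (nv t), real (mv t))"
      unfolding verts by blast
    then show ?thesis
      by auto
  qed
  have support: "bcoeff q (nv e) (mv e) \<noteq> 0"
    using verts e_in(1) by (intro vertex_support) (auto simp: vertices_def)
  obtain m l r yl yr where face: "weighted_face u v q m l r"
    and c: "bcoeff q l yl \<noteq> 0" "bcoeff q r yr \<noteq> 0" "u * l + v * yl = m" "u * r + v * yr = m"
    using weighted_face_exists[OF uv support] by blast
  obtain tl where tl: "tl \<in> {1..s}" "l = nv tl" "yl = mv tl"
    using vertex_index[OF weighted_face_left_corner_extreme[OF face uv c(1,3)]] by blast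
  obtain tr where tr: "tr \<in> {1..s}" "r = nv tr" "yr = mv tr"
    using vertex_index[OF weighted_face_right_corner_extreme[OF face uv c(2,4)]] by blast
  have "m \<le> w e"
    using weighted_face_weight_ge[OF face support] unfolding w_def .
  then have "w tl = w e \<and> nv e \<le> l" "w tr = w e \<and> r \<le> nv (e + 1)"
    using on_edge[OF tl(1)] on_edge[OF tr(1)] c(3,4) tl tr unfolding w_def by auto
  then have "weighted_face u v q (w e) (nv e) (nv (e + 1))"
    using weighted_face_widen[OF face] c(3) tl unfolding w_def by auto
  then show ?thesis
    unfolding u_def v_def w_def .
qed

lemma edges_at_vertex:
  fixes nv mv :: "nat \<Rightarrow> nat" and s k :: nat
  assumes verts: "vertices q = {(real (nv i), real (mv i)) | i. i \<in> {1..s}}"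
    and nv_mono: "\<forall>i\<in>{1..s}. \<forall>j\<in>{1..s}. i < j \<longrightarrow> nv i < nv j"
    and mv_mono: "\<forall>i\<in>{1..s}. \<forall>j\<in>{1..s}. i < j \<longrightarrow> mv i > mv j"
    and k: "2 \<le> k" "k < s"
  defines "\<alpha> \<equiv> mv k - mv (k + 1)" and "\<beta> \<equiv> nv (k + 1) - nv k"
    and "\<alpha>' \<equiv> mv (k - 1) - mv k" and "\<beta>' \<equiv> nv k - nv (k - 1)"
  shows "\<alpha> > 0 \<and> \<beta> > 0 \<and> \<alpha>' > 0 \<and> \<beta>' > 0 \<and> nv (k + 1) = nv k + \<beta> \<and> mv k = mv (k + 1) + \<alpha>
    \<and> nv k = nv (k - 1) + \<beta>' \<and> mv (k - 1) = mv k + \<alpha>'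
    \<and> weighted_face \<alpha> \<beta> q (\<alpha> * nv k + \<beta> * mv k) (nv k) (nv (k + 1))
    \<and> (\<forall>i j. bcoeff q i j \<noteq> 0 \<longrightarrow> \<alpha>' * nv k + \<beta>' * mv k \<le> \<alpha>' * i + \<beta>' * j)
    \<and> \<alpha> * \<beta>' < \<alpha>' * \<beta>
    \<and> bcoeff q (nv k) (mv k) \<noteq> 0 \<and> bcoeff q (nv (k + 1)) (mv (k + 1)) \<noteq> 0"
proof -
  have ks: "k - 1 \<in> {1..s}" "k \<in> {1..s}" "k + 1 \<in> {1..s}" "k - 1 + 1 = k" "1 \<le> k - 1" "k - 1 < s"
    using k by auto
  have lt: "nv (k - 1) < nv k" "nv k < nv (k + 1)" "mv k < mv (k - 1)" "mv (k + 1) < mv k"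
    using nv_mono mv_mono ks by auto
  then have pos: "\<alpha> > 0" "\<beta> > 0" "\<alpha>' > 0" "\<beta>' > 0"
    and shifts: "nv (k + 1) = nv k + \<beta>" "mv k = mv (k + 1) + \<alpha>" "nv k = nv (k - 1) + \<beta>'" "mv (k - 1) = mv k + \<alpha>'"
    by (simp_all add: \<alpha>_def \<beta>_def \<alpha>'_def \<beta>'_def)
  have face: "weighted_face \<alpha> \<beta> q (\<alpha> * nv k + \<beta> * mv k) (nv k) (nv (k + 1))"
    using weighted_face_of_consecutive_vertices[OF verts nv_mono mv_mono, of k] k
    unfolding \<alpha>_def \<beta>_def by simp
  have face': "weighted_face \<alpha>' \<beta>' q (\<alpha>' * nv k + \<beta>' * mv k) (nv (k - 1)) (nv k)"
  proof -
    have "\<alpha>' * nv (k - 1) + \<beta>' * mv (k - 1) = \<alpha>' * nv k + \<beta>' * mv k"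
      unfolding shifts(3,4) by (simp add: algebra_simps)
    then show ?thesis
      using weighted_face_of_consecutive_vertices[OF verts nv_mono mv_mono ks(5,6)] ks(4)
      unfolding \<alpha>'_def \<beta>'_def by simp
  qed
  have qv: "bcoeff q (nv t) (mv t) \<noteq> 0" if "t \<in> {1..s}" for t
    using verts that by (intro vertex_support) (auto simp: vertices_def)
  have "\<alpha>' * nv k + \<beta>' * mv k < \<alpha>' * nv (k + 1) + \<beta>' * mv (k + 1)"
    using face' qv[OF ks(3)] lt unfolding weighted_face_def by fastforce
  then have "\<alpha> * \<beta>' < \<alpha>' * \<beta>"
    unfolding shifts(1,2) by (simp add: algebra_simps)
  with pos shifts face face' qv[OF ks(2)] qv[OF ks(3)] show ?thesis
    using weighted_face_weight_ge[OF face'] by blast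
qed

(* In the notation of the statement, gamma_n = gamma * hsum delta d n. *)
definition hsum :: "nat \<Rightarrow> nat \<Rightarrow> nat \<Rightarrow> nat" where
  "hsum \<delta> y n = (\<Sum>i<n. \<delta> ^ (n - 1 - i) * y ^ i)"

lemma hsum_0 [simp]: "hsum \<delta> y 0 = 0"
  by (simp add: hsum_def)

lemma hsum_Suc: "hsum \<delta> y (Suc n) = \<delta> ^ n + y * hsum \<delta> y n"
  unfolding hsum_def sum.lessThan_Suc_shift by (simp add: sum_distrib_left algebra_simps)

lemma hsum_pos: "\<delta> \<ge> 1 \<Longrightarrow> n \<ge> 1 \<Longrightarrow> hsum \<delta> y n > 0"
  by (cases n) (simp_all add: hsum_Suc)

lemma real_hsum: "real (hsum \<delta> y n) = (\<Sum>i<n. real \<delta> ^ (n - 1 - i) * real y ^ i)"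
  by (simp add: hsum_def)

lemma hsum_telescope: "(int \<delta> - int y) * int (hsum \<delta> y n) = int \<delta> ^ n - int y ^ n"
proof (induction n)
  case (Suc n)
  have "(int \<delta> - int y) * int (hsum \<delta> y (Suc n))
      = (int \<delta> - int y) * int \<delta> ^ n + int y * ((int \<delta> - int y) * int (hsum \<delta> y n))"
    by (simp add: hsum_Suc algebra_simps)
  also have "\<dots> = int \<delta> ^ Suc n - int y ^ Suc n"
    unfolding Suc.IH by (simp add: algebra_simps)
  finally show ?case .
qed simp

lemma hsum_weight:
  "int (a * (x * hsum \<delta> y n) + b * y ^ n) - int (b * \<delta> ^ n)
     = int (hsum \<delta> y n) * (int (a * x + b * y) - int (b * \<delta>))"
  using arg_cong[OF hsum_telescope[of \<delta> y n], of "\<lambda>z. int b * z"] by (simp add: algebra_simps)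

lemma hsum_weight_less:
  assumes "a * x + b * y < b * \<delta>" "\<delta> \<ge> 1" "n \<ge> 1"
  shows "a * (x * hsum \<delta> y n) + b * y ^ n < b * \<delta> ^ n"
proof -
  have "0 < int (hsum \<delta> y n)"
    using hsum_pos[OF assms(2,3)] by simp
  moreover have "int (a * x + b * y) < int (b * \<delta>)"
    using assms(1) by (simp only: of_nat_less_iff)
  ultimately have "int (hsum \<delta> y n) * (int (a * x + b * y) - int (b * \<delta>)) < 0"
    by (simp only: mult_pos_neg diff_less_0_iff_less)
  then have "int (a * (x * hsum \<delta> y n) + b * y ^ n) - int (b * \<delta> ^ n) < 0"
    unfolding hsum_weight .
  then show ?thesis
    by (simp only: diff_less_0_iff_less of_nat_less_iff)
qed

lemma hsum_weight_ge:
  assumes "b * \<delta> \<le> a * x + b * y"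
  shows "b * \<delta> ^ n \<le> a * (x * hsum \<delta> y n) + b * y ^ n"
proof -
  have "int (b * \<delta>) \<le> int (a * x + b * y)"
    using assms by (simp only: of_nat_le_iff)
  then have "0 \<le> int (hsum \<delta> y n) * (int (a * x + b * y) - int (b * \<delta>))"
    by (simp only: mult_nonneg_nonneg of_nat_0_le_iff diff_ge_0_iff_ge)
  then have "0 \<le> int (a * (x * hsum \<delta> y n) + b * y ^ n) - int (b * \<delta> ^ n)"
    unfolding hsum_weight .
  then show ?thesis
    by (simp only: diff_ge_0_iff_ge of_nat_le_iff)
qed

lemma hsum_weight_eq:
  assumes "a * x + b * y = b * \<delta>"
  shows "a * (x * hsum \<delta> y n) + b * y ^ n = b * \<delta> ^ n"
proof -
  have "int (a * (x * hsum \<delta> y n) + b * y ^ n) - int (b * \<delta> ^ n) = 0"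
    unfolding hsum_weight assms by simp
  then show ?thesis
    by (simp only: right_minus_eq of_nat_eq_iff)
qed

(* (s, t) is a positive combination of (a, b) and (a', b'). *)
lemma weight_in_open_cone:
  fixes a b a' b' s t x y :: int
  assumes "a * b' < a' * b" "b' * s < a' * t" "a * t < b * s"
    and "0 \<le> a * x + b * y" "0 \<le> a' * x + b' * y"
  shows "0 \<le> s * x + t * y \<and> (s * x + t * y = 0 \<longrightarrow> x = 0 \<and> y = 0)"
proof -
  have decomp: "(a' * b - a * b') * (s * x + t * y)
      = (a' * t - b' * s) * (a * x + b * y) + (b * s - a * t) * (a' * x + b' * y)"
    by (simp add: algebra_simps)
  have nonneg: "0 \<le> (a' * t - b' * s) * (a * x + b * y)" "0 \<le> (b * s - a * t) * (a' * x + b' * y)"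
    using assms by simp_all
  then have "0 \<le> (a' * b - a * b') * (s * x + t * y)"
    unfolding decomp by simp
  then have "0 \<le> s * x + t * y"
    using assms(1) by (simp add: zero_le_mult_iff)
  moreover have "x = 0 \<and> y = 0" if "s * x + t * y = 0"
  proof -
    have ab: "a * x + b * y = 0" "a' * x + b' * y = 0"
      using decomp nonneg assms(2,3) that by (simp_all add: add_nonneg_eq_0_iff)
    have "x * (a * b' - a' * b) = b' * (a * x + b * y) - b * (a' * x + b' * y)"
      "y * (a * b' - a' * b) = a * (a' * x + b' * y) - a' * (a * x + b * y)"
      by (simp_all add: algebra_simps)
    then have "x * (a * b' - a' * b) = 0" "y * (a * b' - a' * b) = 0"
      unfolding ab by simp_all
    then show ?thesis
      using assms(1) by simp
  qed
  ultimately show ?thesis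
    by blast
qed

lemma line_shift_less:
  fixes a b i j i' j' L D0 :: nat
  assumes "a * i + b * j = a * i' + b * j'" "i < i'" "a * L < b * D0"
  shows "i * D0 + j * L < i' * D0 + j' * L"
proof -
  have line: "int a * (int i' - int i) = int b * (int j - int j')"
    using assms(1) by (simp add: algebra_simps flip: of_nat_mult of_nat_add)
  have "int b * (int (i' * D0 + j' * L) - int (i * D0 + j * L))
      = (int i' - int i) * (int b * int D0) - int L * (int a * (int i' - int i))"
    unfolding line by (simp add: algebra_simps)
  also have "\<dots> = (int i' - int i) * (int b * int D0 - int a * int L)"
    by (simp add: algebra_simps)
  also have "\<dots> > 0"
    using assms(2,3) by (simp flip: of_nat_mult)
  finally have "0 < int b * (int (i' * D0 + j' * L) - int (i * D0 + j * L))" .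
  moreover have "0 < int b"
    using assms(3) by (cases b) auto
  ultimately have "0 < int (i' * D0 + j' * L) - int (i * D0 + j * L)"
    by (rule zero_less_mult_pos)
  then show ?thesis
    by (simp only: diff_gt_0_iff_gt of_nat_less_iff)
qed

lemma edge_endpoints_extremal:
  fixes \<alpha> \<beta> \<gamma> d C D i j L D0 :: nat
  assumes face: "weighted_face \<alpha> \<beta> q (\<alpha> * \<gamma> + \<beta> * d) \<gamma> C" and "\<beta> > 0"
    and CD: "\<alpha> * C + \<beta> * D = \<alpha> * \<gamma> + \<beta> * d"
    and ij: "bcoeff q i j \<noteq> 0" "\<alpha> * i + \<beta> * j = \<alpha> * \<gamma> + \<beta> * d"
    and "\<alpha> * L < \<beta> * D0"
  shows "(i, j) \<noteq> (\<gamma>, d) \<Longrightarrow> \<gamma> * D0 + d * L < i * D0 + j * L"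
    and "(i, j) \<noteq> (C, D) \<Longrightarrow> i * D0 + j * L < C * D0 + D * L"
proof -
  have i: "\<gamma> \<le> i" "i \<le> C"
    using face ij unfolding weighted_face_def by fastforce+
  show "\<gamma> * D0 + d * L < i * D0 + j * L" if "(i, j) \<noteq> (\<gamma>, d)"
  proof (rule line_shift_less[OF _ _ \<open>\<alpha> * L < \<beta> * D0\<close>])
    show "\<alpha> * \<gamma> + \<beta> * d = \<alpha> * i + \<beta> * j"
      using ij(2) by simp
    then show "\<gamma> < i"
      using i that \<open>\<beta> > 0\<close> by (cases "i = \<gamma>") auto
  qed
  show "i * D0 + j * L < C * D0 + D * L" if "(i, j) \<noteq> (C, D)"
  proof (rule line_shift_less[OF _ _ \<open>\<alpha> * L < \<beta> * D0\<close>])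
    show "\<alpha> * i + \<beta> * j = \<alpha> * C + \<beta> * D"
      using ij(2) CD by simp
    then show "i < C"
      using i that \<open>\<beta> > 0\<close> by (cases "i = C") auto
  qed
qed

lemma strict_minimizer_at_vertex:
  fixes \<alpha> \<beta> \<alpha>' \<beta>' \<gamma> d s t i j :: nat
  assumes "\<alpha> * \<gamma> + \<beta> * d \<le> \<alpha> * i + \<beta> * j" "\<alpha>' * \<gamma> + \<beta>' * d \<le> \<alpha>' * i + \<beta>' * j"
    and "\<alpha> * \<beta>' < \<alpha>' * \<beta>" "\<beta>' * s < \<alpha>' * t" "\<alpha> * t < \<beta> * s"
  shows "s * \<gamma> + t * d \<le> s * i + t * j \<and> (s * i + t * j = s * \<gamma> + t * d \<longrightarrow> (i, j) = (\<gamma>, d))"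
proof -
  have diff: "int (a * i + b * j) - int (a * \<gamma> + b * d) = int a * (int i - int \<gamma>) + int b * (int j - int d)"
    for a b
    by (simp add: algebra_simps)
  have "0 \<le> int \<alpha> * (int i - int \<gamma>) + int \<beta> * (int j - int d)"
    "0 \<le> int \<alpha>' * (int i - int \<gamma>) + int \<beta>' * (int j - int d)"
    using assms(1,2) unfolding diff[symmetric] by (simp_all only: diff_ge_0_iff_ge of_nat_le_iff)
  with assms(3-5) have "0 \<le> int s * (int i - int \<gamma>) + int t * (int j - int d) \<and>
      (int s * (int i - int \<gamma>) + int t * (int j - int d) = 0 \<longrightarrow> int i - int \<gamma> = 0 \<and> int j - int d = 0)"
    by (intro weight_in_open_cone[where a = "int \<alpha>" and b = "int \<beta>" and a' = "int \<alpha>'" and b' = "int \<beta>'"])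
      (simp_all flip: of_nat_mult)
  then show ?thesis
    unfolding diff[symmetric]
    by (simp only: diff_ge_0_iff_ge right_minus_eq of_nat_le_iff of_nat_eq_iff prod.inject) blast
qed

lemma Qiter_face_case_i:
  fixes \<delta> \<gamma> d C D \<alpha> \<beta> \<alpha>' \<beta>' n :: nat
  assumes p: "p \<noteq> 0" "subdegree p = \<delta>" "\<delta> \<ge> 1"
    and pos: "\<alpha> > 0" "\<beta> > 0"
    and CD: "C = \<gamma> + \<beta>" "d = D + \<alpha>"
    and face: "weighted_face \<alpha> \<beta> q (\<alpha> * \<gamma> + \<beta> * d) \<gamma> C"
    and face': "\<And>i j. bcoeff q i j \<noteq> 0 \<Longrightarrow> \<alpha>' * \<gamma> + \<beta>' * d \<le> \<alpha>' * i + \<beta>' * j"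
    and convex: "\<alpha> * \<beta>' < \<alpha>' * \<beta>"
    and qv: "bcoeff q \<gamma> d \<noteq> 0" "bcoeff q C D \<noteq> 0"
    and below: "\<beta>' * \<delta> \<le> \<alpha>' * \<gamma> + \<beta>' * d"
    and above: "\<alpha> * \<gamma> + \<beta> * d < \<beta> * \<delta>"
    and "n \<ge> 1"
  shows "weighted_face \<alpha> \<beta> (Qiter p q n) (\<alpha> * (\<gamma> * hsum \<delta> d n) + \<beta> * d ^ n)
      (\<gamma> * hsum \<delta> d n) (\<gamma> * hsum \<delta> d n + \<beta> * d ^ (n - 1))
    \<and> bcoeff (Qiter p q n) (\<gamma> * hsum \<delta> d n) (d ^ n) \<noteq> 0
    \<and> bcoeff (Qiter p q n) (\<gamma> * hsum \<delta> d n + \<beta> * d ^ (n - 1)) (D * d ^ (n - 1)) \<noteq> 0"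
  using \<open>n \<ge> 1\<close>
proof (induction n rule: nat_induct_at_least)
  case base
  then show ?case
    using face qv CD by (simp add: bsubst_X_X hsum_Suc)
next
  case (Suc n)
  define D0 where "D0 = \<delta> ^ n"
  define L where "L = \<gamma> * hsum \<delta> d n"
  define c where "c = \<alpha> * L + \<beta> * d ^ n"
  have d: "d \<ge> 1"
    using CD pos by simp
  have dn: "d ^ n = d * d ^ (n - 1)"
    using Suc.hyps by (simp add: power_eq_if)
  have c_lt: "c < \<beta> * D0"
    using hsum_weight_less[OF above p(3) Suc.hyps] unfolding c_def L_def D0_def .
  have "\<alpha> * (\<beta>' * D0) \<le> \<alpha> * (\<alpha>' * L + \<beta>' * d ^ n)"
    unfolding D0_def L_def by (rule mult_le_mono2) (rule hsum_weight_ge[OF below])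
  also have "\<dots> < \<alpha>' * c"
    using convex d unfolding c_def by (simp add: algebra_simps)
  finally have c_gt: "\<alpha> * (\<beta>' * D0) < \<alpha>' * c" .
  \<comment> \<open>The weight (\<alpha> D0, c) lies strictly inside the cone of the normals of the two edges at (\<gamma>, d).\<close>
  have unique: "\<alpha> * (\<gamma> * D0) + d * c \<le> \<alpha> * (i * D0) + j * c \<and>
      (\<alpha> * (i * D0) + j * c = \<alpha> * (\<gamma> * D0) + d * c \<longrightarrow> (i, j) = (\<gamma>, d))"
    if "bcoeff q i j \<noteq> 0" for i j
    using strict_minimizer_at_vertex[OF weighted_face_weight_ge[OF face that] face'[OF that] convex,
        of "\<alpha> * D0" c] c_lt c_gt pos(1)
    by (simp add: algebra_simps)
  have P: "piter p n \<noteq> 0" "subdegree (piter p n) = D0"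
    using subdegree_piter[OF p] unfolding D0_def by blast+
  have step: "weighted_face \<alpha> \<beta> (bsubst q (piter p n) (Qiter p q n)) (\<alpha> * (\<gamma> * D0) + d * c)
      (\<gamma> * D0 + d * L) (\<gamma> * D0 + d * (L + \<beta> * d ^ (n - 1)))
    \<and> bcoeff (bsubst q (piter p n) (Qiter p q n)) (\<gamma> * D0 + d * L) (d * d ^ n) \<noteq> 0
    \<and> bcoeff (bsubst q (piter p n) (Qiter p q n)) (\<gamma> * D0 + d * (L + \<beta> * d ^ (n - 1)))
        (d * (D * d ^ (n - 1))) \<noteq> 0"
  proof (rule weighted_face_bsubst[OF pos P])
    show "1 \<le> D0" "0 < c"
      using p(3) pos d unfolding D0_def c_def by simp_all
    show "weighted_face \<alpha> \<beta> (Qiter p q n) c L (L + \<beta> * d ^ (n - 1))"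
      "bcoeff (Qiter p q n) L (d ^ n) \<noteq> 0" "bcoeff (Qiter p q n) (L + \<beta> * d ^ (n - 1)) (D * d ^ (n - 1)) \<noteq> 0"
      using Suc.IH unfolding c_def L_def by blast+
    show "\<alpha> * L + \<beta> * d ^ n = c"
      unfolding c_def ..
    have "\<alpha> * (L + \<beta> * d ^ (n - 1)) + \<beta> * (D * d ^ (n - 1)) = \<alpha> * L + \<beta> * ((D + \<alpha>) * d ^ (n - 1))"
      by (simp add: algebra_simps)
    then show "\<alpha> * (L + \<beta> * d ^ (n - 1)) + \<beta> * (D * d ^ (n - 1)) = c"
      unfolding c_def dn CD(2)[symmetric] .
    show "bcoeff q \<gamma> d \<noteq> 0" "bcoeff q \<gamma> d \<noteq> 0"
      by (fact qv(1))+
    show "\<alpha> * (\<gamma> * D0) + d * c = \<alpha> * (\<gamma> * D0) + d * c" ..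
    fix i j assume nz: "bcoeff q i j \<noteq> 0"
    show "\<alpha> * (\<gamma> * D0) + d * c \<le> \<alpha> * (i * D0) + j * c"
      using unique[OF nz] by blast
    show "\<gamma> * D0 + d * L < i * D0 + j * L" "i * D0 + j * (L + \<beta> * d ^ (n - 1)) < \<gamma> * D0 + d * (L + \<beta> * d ^ (n - 1))"
      if "\<alpha> * (i * D0) + j * c = \<alpha> * (\<gamma> * D0) + d * c" "(i, j) \<noteq> (\<gamma>, d)"
      using unique[OF nz] that by blast+
  qed
  have "hsum \<delta> d (Suc n) = D0 + d * hsum \<delta> d n"
    by (simp add: hsum_Suc D0_def)
  moreover have "d * d ^ (n - Suc 0) = d ^ n"
    using dn by simp
  ultimately show ?case
    using step unfolding c_def L_def by (simp add: algebra_simps)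
qed

lemma Qiter_face_case_ii:
  fixes \<delta> \<gamma> d C D \<alpha> \<beta> n :: nat
  assumes p: "p \<noteq> 0" "subdegree p = \<delta>" "\<delta> \<ge> 1"
    and pos: "\<alpha> > 0" "\<beta> > 0" "D > 0"
    and CD: "C = \<gamma> + \<beta>" "d = D + \<alpha>"
    and face: "weighted_face \<alpha> \<beta> q (\<alpha> * \<gamma> + \<beta> * d) \<gamma> C"
    and qv: "bcoeff q \<gamma> d \<noteq> 0" "bcoeff q C D \<noteq> 0"
    and on_line: "\<alpha> * \<gamma> + \<beta> * d = \<beta> * \<delta>"
    and "n \<ge> 1"
  shows "weighted_face \<alpha> \<beta> (Qiter p q n) (\<beta> * \<delta> ^ n) (\<gamma> * hsum \<delta> d n) (C * hsum \<delta> D n)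
    \<and> bcoeff (Qiter p q n) (\<gamma> * hsum \<delta> d n) (d ^ n) \<noteq> 0
    \<and> bcoeff (Qiter p q n) (C * hsum \<delta> D n) (D ^ n) \<noteq> 0"
  using \<open>n \<ge> 1\<close>
proof (induction n rule: nat_induct_at_least)
  case base
  then show ?case
    using face qv on_line by (simp add: bsubst_X_X hsum_Suc)
next
  case (Suc n)
  define D0 where "D0 = \<delta> ^ n"
  define L where "L = \<gamma> * hsum \<delta> d n"
  define R where "R = C * hsum \<delta> D n"
  have on_line': "\<alpha> * C + \<beta> * D = \<beta> * \<delta>"
    using on_line unfolding CD by (simp add: algebra_simps)
  have L_line: "\<alpha> * L + \<beta> * d ^ n = \<beta> * D0" and R_line: "\<alpha> * R + \<beta> * D ^ n = \<beta> * D0"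
    using hsum_weight_eq[OF on_line] hsum_weight_eq[OF on_line'] unfolding L_def R_def D0_def by blast+
  have "0 < \<beta> * d ^ n" "0 < \<beta> * D ^ n"
    using pos CD by simp_all
  then have L_lt: "\<alpha> * L < \<beta> * D0" and R_lt: "\<alpha> * R < \<beta> * D0"
    using L_line R_line by linarith+
  have weight: "\<alpha> * (i * D0) + j * (\<beta> * D0) = D0 * (\<alpha> * i + \<beta> * j)" for i j
    by (simp add: algebra_simps)
  have "D0 > 0"
    using p(3) by (simp add: D0_def)
  then have on_edge: "\<alpha> * i + \<beta> * j = \<alpha> * \<gamma> + \<beta> * d"
    if "\<alpha> * (i * D0) + j * (\<beta> * D0) = \<alpha> * (\<gamma> * D0) + d * (\<beta> * D0)" for i j
    using that unfolding weight by simp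
  have P: "piter p n \<noteq> 0" "subdegree (piter p n) = D0"
    using subdegree_piter[OF p] unfolding D0_def by blast+
  have step: "weighted_face \<alpha> \<beta> (bsubst q (piter p n) (Qiter p q n)) (\<alpha> * (\<gamma> * D0) + d * (\<beta> * D0))
      (\<gamma> * D0 + d * L) (C * D0 + D * R)
    \<and> bcoeff (bsubst q (piter p n) (Qiter p q n)) (\<gamma> * D0 + d * L) (d * d ^ n) \<noteq> 0
    \<and> bcoeff (bsubst q (piter p n) (Qiter p q n)) (C * D0 + D * R) (D * D ^ n) \<noteq> 0"
  proof (rule weighted_face_bsubst[OF pos(1,2) P])
    show "1 \<le> D0" "0 < \<beta> * D0"
      using p(3) pos unfolding D0_def by simp_all
    show "weighted_face \<alpha> \<beta> (Qiter p q n) (\<beta> * D0) L R"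
      "bcoeff (Qiter p q n) L (d ^ n) \<noteq> 0" "bcoeff (Qiter p q n) R (D ^ n) \<noteq> 0"
      using Suc.IH unfolding D0_def L_def R_def by blast+
    show "\<alpha> * L + \<beta> * d ^ n = \<beta> * D0" "\<alpha> * R + \<beta> * D ^ n = \<beta> * D0"
      by (fact L_line R_line)+
    show "bcoeff q \<gamma> d \<noteq> 0" "bcoeff q C D \<noteq> 0"
      by (fact qv)+
    show "\<alpha> * (C * D0) + D * (\<beta> * D0) = \<alpha> * (\<gamma> * D0) + d * (\<beta> * D0)"
      unfolding weight on_line on_line' ..
    fix i j assume nz: "bcoeff q i j \<noteq> 0"
    show "\<alpha> * (\<gamma> * D0) + d * (\<beta> * D0) \<le> \<alpha> * (i * D0) + j * (\<beta> * D0)"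
      unfolding weight using weighted_face_weight_ge[OF face nz] by simp
    assume "\<alpha> * (i * D0) + j * (\<beta> * D0) = \<alpha> * (\<gamma> * D0) + d * (\<beta> * D0)"
    note extremal = edge_endpoints_extremal[OF face pos(2) _ nz on_edge[OF this]]
    show "\<gamma> * D0 + d * L < i * D0 + j * L" if "(i, j) \<noteq> (\<gamma>, d)"
      using extremal(1)[OF _ L_lt that] on_line on_line' by simp
    show "i * D0 + j * R < C * D0 + D * R" if "(i, j) \<noteq> (C, D)"
      using extremal(2)[OF _ R_lt that] on_line on_line' by simp
  qed
  have "\<alpha> * (\<gamma> * D0) + d * (\<beta> * D0) = D0 * (\<alpha> * \<gamma> + \<beta> * d)"
    by (simp add: algebra_simps)
  also have "\<dots> = \<beta> * \<delta> ^ Suc n"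
    unfolding on_line D0_def by (simp add: algebra_simps)
  finally have "\<alpha> * (\<gamma> * D0) + d * (\<beta> * D0) = \<beta> * \<delta> ^ Suc n" .
  moreover have "\<gamma> * D0 + d * L = \<gamma> * hsum \<delta> d (Suc n)" "C * D0 + D * R = C * hsum \<delta> D (Suc n)"
    unfolding D0_def L_def R_def hsum_Suc by (simp_all add: algebra_simps)
  ultimately show ?case
    using step by simp
qed

lemma Qiter_next_vertex_case_i:
  fixes \<delta> \<gamma> d C D \<alpha> \<beta> \<alpha>' \<beta>' n :: nat
  assumes p: "p \<noteq> 0" "subdegree p = \<delta>" "\<delta> \<ge> 1"
    and pos: "\<alpha> > 0" "\<beta> > 0"
    and CD: "C = \<gamma> + \<beta>" "d = D + \<alpha>"
    and face: "weighted_face \<alpha> \<beta> q (\<alpha> * \<gamma> + \<beta> * d) \<gamma> C"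
    and face': "\<And>i j. bcoeff q i j \<noteq> 0 \<Longrightarrow> \<alpha>' * \<gamma> + \<beta>' * d \<le> \<alpha>' * i + \<beta>' * j"
    and convex: "\<alpha> * \<beta>' < \<alpha>' * \<beta>"
    and qv: "bcoeff q \<gamma> d \<noteq> 0" "bcoeff q C D \<noteq> 0"
    and below: "\<beta>' * \<delta> \<le> \<alpha>' * \<gamma> + \<beta>' * d"
    and above: "yint (real \<gamma>, real d) (real C, real D) < real \<delta>"
    and n: "n \<ge> 1"
  shows "next_vertex (Qiter p q n) (real \<gamma> * (\<Sum>i<n. real \<delta> ^ (n - 1 - i) * real d ^ i), real d ^ n)
      (real \<gamma> * (\<Sum>i<n. real \<delta> ^ (n - 1 - i) * real d ^ i) - (real \<gamma> - real C) * real d ^ (n - 1),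
       real D * real d ^ (n - 1))
    \<and> slope (real \<gamma> * (\<Sum>i<n. real \<delta> ^ (n - 1 - i) * real d ^ i), real d ^ n)
      (real \<gamma> * (\<Sum>i<n. real \<delta> ^ (n - 1 - i) * real d ^ i) - (real \<gamma> - real C) * real d ^ (n - 1),
       real D * real d ^ (n - 1)) = - (real \<alpha> / real \<beta>)
    \<and> yint (real \<gamma> * (\<Sum>i<n. real \<delta> ^ (n - 1 - i) * real d ^ i), real d ^ n)
      (real \<gamma> * (\<Sum>i<n. real \<delta> ^ (n - 1 - i) * real d ^ i) - (real \<gamma> - real C) * real d ^ (n - 1),
       real D * real d ^ (n - 1)) < real \<delta> ^ n"
proof -
  have "\<alpha> * \<gamma> + \<beta> * d < \<beta> * \<delta>"
    using above yint_edge_compare(1)[OF CD pos(2)] by blast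
  note face_n = Qiter_face_case_i[OF p pos CD face face' convex qv below this n]
  define L where "L = \<gamma> * hsum \<delta> d n"
  define c where "c = \<alpha> * L + \<beta> * d ^ n"
  have "c < \<beta> * \<delta> ^ n"
    using hsum_weight_less[OF \<open>\<alpha> * \<gamma> + \<beta> * d < \<beta> * \<delta>\<close> p(3) n] unfolding c_def L_def .
  then have lt: "real c / real \<beta> < real \<delta> ^ n"
    using pos(2) by (simp add: divide_less_eq mult.commute flip: of_nat_mult of_nat_power)
  have "\<alpha> * (L + \<beta> * d ^ (n - 1)) + \<beta> * (D * d ^ (n - 1)) = c"
    using n unfolding c_def CD(2) by (cases n) (simp_all add: algebra_simps)
  then have edge: "next_vertex (Qiter p q n) (real L, real (d ^ n)) (real (L + \<beta> * d ^ (n - 1)), real (D * d ^ (n - 1)))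
    \<and> slope (real L, real (d ^ n)) (real (L + \<beta> * d ^ (n - 1)), real (D * d ^ (n - 1))) = - (real \<alpha> / real \<beta>)
    \<and> yint (real L, real (d ^ n)) (real (L + \<beta> * d ^ (n - 1)), real (D * d ^ (n - 1))) = real c / real \<beta>"
    using face_n pos CD by (intro weighted_face_edge) (auto simp: L_def c_def)
  have points: "real \<gamma> * (\<Sum>i<n. real \<delta> ^ (n - 1 - i) * real d ^ i) = real L"
    "real L - (real \<gamma> - real C) * real d ^ (n - 1) = real (L + \<beta> * d ^ (n - 1))"
    "real d ^ n = real (d ^ n)" "real D * real d ^ (n - 1) = real (D * d ^ (n - 1))"
    unfolding L_def CD(1) by (simp_all add: real_hsum algebra_simps)
  show ?thesis
    unfolding points by (simp only: edge lt simp_thms)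
qed

lemma Qiter_next_vertex_case_ii:
  fixes \<delta> \<gamma> d C D \<alpha> \<beta> n :: nat
  assumes p: "p \<noteq> 0" "subdegree p = \<delta>" "\<delta> \<ge> 1"
    and pos: "\<alpha> > 0" "\<beta> > 0" "D > 0"
    and CD: "C = \<gamma> + \<beta>" "d = D + \<alpha>"
    and face: "weighted_face \<alpha> \<beta> q (\<alpha> * \<gamma> + \<beta> * d) \<gamma> C"
    and qv: "bcoeff q \<gamma> d \<noteq> 0" "bcoeff q C D \<noteq> 0"
    and on_line: "real \<delta> = yint (real \<gamma>, real d) (real C, real D)"
    and n: "n \<ge> 1"
  shows "next_vertex (Qiter p q n) (real \<gamma> * (\<Sum>i<n. real \<delta> ^ (n - 1 - i) * real d ^ i), real d ^ n)
      ((\<Sum>i<n. real \<delta> ^ (n - 1 - i) * real D ^ i) * real C, real D ^ n)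
    \<and> slope (real \<gamma> * (\<Sum>i<n. real \<delta> ^ (n - 1 - i) * real d ^ i), real d ^ n)
      ((\<Sum>i<n. real \<delta> ^ (n - 1 - i) * real D ^ i) * real C, real D ^ n) = - (real \<alpha> / real \<beta>)
    \<and> real \<delta> ^ n = yint (real \<gamma> * (\<Sum>i<n. real \<delta> ^ (n - 1 - i) * real d ^ i), real d ^ n)
      ((\<Sum>i<n. real \<delta> ^ (n - 1 - i) * real D ^ i) * real C, real D ^ n)"
proof -
  have line: "\<alpha> * \<gamma> + \<beta> * d = \<beta> * \<delta>"
    using on_line yint_edge_compare(3)[OF CD pos(2)] by blast
  note face_n = Qiter_face_case_ii[OF p pos CD face qv line n]
  define L R where "L = \<gamma> * hsum \<delta> d n" and "R = C * hsum \<delta> D n"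
  have line': "\<alpha> * C + \<beta> * D = \<beta> * \<delta>"
    using line unfolding CD by (simp add: algebra_simps)
  have "\<alpha> * L + \<beta> * d ^ n = \<beta> * \<delta> ^ n" "\<alpha> * R + \<beta> * D ^ n = \<beta> * \<delta> ^ n"
    unfolding L_def R_def by (rule hsum_weight_eq[OF line], rule hsum_weight_eq[OF line'])
  moreover have "L < R"
  proof -
    have "D ^ n < d ^ n"
      using CD pos n by (intro power_strict_mono) simp_all
    then have "\<beta> * D ^ n < \<beta> * d ^ n"
      using pos(2) by simp
    then have "\<alpha> * L < \<alpha> * R"
      using calculation by linarith
    then show ?thesis
      by simp
  qed
  ultimately have edge: "next_vertex (Qiter p q n) (real L, real (d ^ n)) (real R, real (D ^ n))
    \<and> slope (real L, real (d ^ n)) (real R, real (D ^ n)) = - (real \<alpha> / real \<beta>)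
    \<and> yint (real L, real (d ^ n)) (real R, real (D ^ n)) = real (\<beta> * \<delta> ^ n) / real \<beta>"
    using face_n pos by (intro weighted_face_edge) (auto simp: L_def R_def)
  have points: "real \<gamma> * (\<Sum>i<n. real \<delta> ^ (n - 1 - i) * real d ^ i) = real L"
    "(\<Sum>i<n. real \<delta> ^ (n - 1 - i) * real D ^ i) * real C = real R"
    "real d ^ n = real (d ^ n)" "real D ^ n = real (D ^ n)"
    "real (\<beta> * \<delta> ^ n) / real \<beta> = real \<delta> ^ n"
    unfolding L_def R_def using pos(2) by (simp_all add: real_hsum)
  show ?thesis
    unfolding points by (simp only: edge points simp_thms)
qed

theorem proposition6:
  fixes p :: "complex fps" and q :: bfps and \<delta> :: nat
    and s k :: nat and nv mv :: "nat \<Rightarrow> nat"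
  assumes p_conv: "convergent_fps1 p"
    and q_conv: "convergent_fps2 q"
    and delta_pos: "\<delta> \<ge> 1"
    and p_low: "\<forall>i<\<delta>. fps_nth p i = 0"
    and p_lead: "fps_nth p \<delta> \<noteq> 0"
    and q00: "bcoeff q 0 0 = 0"
    and q_nz: "q \<noteq> 0"
    and verts: "vertices q = {(real (nv i), real (mv i)) | i. i \<in> {1..s}}"
    and nv_mono: "\<forall>i\<in>{1..s}. \<forall>j\<in>{1..s}. i < j \<longrightarrow> nv i < nv j"
    and mv_mono: "\<forall>i\<in>{1..s}. \<forall>j\<in>{1..s}. i < j \<longrightarrow> mv i > mv j"
    and s_gt: "s > 2"
    and k_range: "2 \<le> k" "k \<le> s - 1"
    and case4: "yint (real (nv k), real (mv k)) (real (nv (k+1)), real (mv (k+1))) \<le> real \<delta>"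
               "real \<delta> \<le> yint (real (nv (k-1)), real (mv (k-1))) (real (nv k), real (mv k))"
  shows
   "let \<gamma> = real (nv k); d = real (mv k); C = real (nv (k+1)); D = real (mv (k+1));
        T = yint (real (nv k), real (mv k)) (real (nv (k+1)), real (mv (k+1)));
        l1 = (real (nv k) - real (nv (k-1))) / (real (mv (k-1)) - real (mv k));
        l2 = (real (nv (k+1)) - real (nv k)) / (real (mv k) - real (mv (k+1))) - l1;
        \<gamma>n = (\<lambda>n::nat. \<gamma> * (\<Sum>i<n. real \<delta> ^ (n - 1 - i) * d ^ i));
        Cn = (\<lambda>n::nat. \<gamma>n n - (\<gamma> - C) * d ^ (n - 1));
        Dn = (\<lambda>n::nat. D * d ^ (n - 1));
        Cs = (\<lambda>n::nat. (\<Sum>i<n. real \<delta> ^ (n - 1 - i) * D ^ i) * C);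
        Ds = (\<lambda>n::nat. D ^ n)
    in (real \<delta> > T \<longrightarrow>
          (\<forall>n\<ge>1. next_vertex (Qiter p q n) (\<gamma>n n, d ^ n) (Cn n, Dn n)
              \<and> slope (\<gamma>n n, d ^ n) (Cn n, Dn n) = - inverse (l1 + l2)
              \<and> real \<delta> ^ n > yint (\<gamma>n n, d ^ n) (Cn n, Dn n)))
     \<and> (real \<delta> = T \<and> mv (k+1) > 0 \<longrightarrow>
          (\<forall>n\<ge>1. next_vertex (Qiter p q n) (\<gamma>n n, d ^ n) (Cs n, Ds n)
              \<and> slope (\<gamma>n n, d ^ n) (Cs n, Ds n) = - inverse (l1 + l2)
              \<and> real \<delta> ^ n = yint (\<gamma>n n, d ^ n) (Cs n, Ds n)))"
proof -
  define \<gamma> d C D where "\<gamma> = nv k" and "d = mv k" and "C = nv (k + 1)" and "D = mv (k + 1)"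
  define \<alpha> \<beta> \<alpha>' \<beta>' where "\<alpha> = d - D" and "\<beta> = C - \<gamma>"
    and "\<alpha>' = mv (k - 1) - d" and "\<beta>' = \<gamma> - nv (k - 1)"
  have "k < s"
    using k_range s_gt by simp
  note data = edges_at_vertex[OF verts nv_mono mv_mono k_range(1) this,
      folded \<gamma>_def d_def C_def D_def, folded \<alpha>_def \<beta>_def \<alpha>'_def \<beta>'_def]
  then have pos: "\<alpha> > 0" "\<beta> > 0" "\<alpha>' > 0" "\<beta>' > 0" and CD: "C = \<gamma> + \<beta>" "d = D + \<alpha>"
    and CD': "\<gamma> = nv (k - 1) + \<beta>'" "mv (k - 1) = d + \<alpha>'"
    and face: "weighted_face \<alpha> \<beta> q (\<alpha> * \<gamma> + \<beta> * d) \<gamma> C"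
    and face': "\<And>i j. bcoeff q i j \<noteq> 0 \<Longrightarrow> \<alpha>' * \<gamma> + \<beta>' * d \<le> \<alpha>' * i + \<beta>' * j"
    and convex: "\<alpha> * \<beta>' < \<alpha>' * \<beta>"
    and qv: "bcoeff q \<gamma> d \<noteq> 0" "bcoeff q C D \<noteq> 0"
    by blast+
  have p: "p \<noteq> 0" "subdegree p = \<delta>"
    using p_lead p_low by (auto intro: subdegreeI)
  have "\<beta>' * \<delta> \<le> \<alpha>' * nv (k - 1) + \<beta>' * mv (k - 1)"
    using case4(2) yint_edge_compare(2)[OF CD' pos(4)] unfolding \<gamma>_def[symmetric] d_def[symmetric] by blast
  also have "\<dots> = \<alpha>' * \<gamma> + \<beta>' * d"
    unfolding CD' by (simp add: algebra_simps)
  finally have below: "\<beta>' * \<delta> \<le> \<alpha>' * \<gamma> + \<beta>' * d" .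
  have slope: "- inverse ((real \<gamma> - real (nv (k - 1))) / (real (mv (k - 1)) - real d) +
      ((real C - real \<gamma>) / (real d - real D) - (real \<gamma> - real (nv (k - 1))) / (real (mv (k - 1)) - real d)))
      = - (real \<alpha> / real \<beta>)"
    using CD by simp
  show ?thesis
    unfolding Let_def \<gamma>_def[symmetric] d_def[symmetric] C_def[symmetric] D_def[symmetric] slope
    using Qiter_next_vertex_case_i[OF p delta_pos pos(1,2) CD face face' convex qv below]
      Qiter_next_vertex_case_ii[OF p delta_pos pos(1,2) _ CD face qv]
    by blast
qed

end
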